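(* Let $X$ be a compact metric space with metric $d$, let $f\colon X\to X$ be a continuous map with the s-limit shadowing property, let $C\in\mathcal{C}(f)$ and $D\in\mathcal{D}(C)$. Let $\mathcal{F},\mathcal{G}$ be full Furstenberg families which are compatible with $(X^n,f^{\times n})$ for all $n\ge2$, and suppose $\mathcal{F}$ is translation invariant. Let $n\ge2$ and $\delta>0$. If there is a $\delta$-distal $n$-tuple $(a_1,\dots,a_n)\in D^n$ for $f$, then for every $E\in\mathcal{D}(C)$ and every $0<r<\delta$, $V^s(E)$ is generic $(\mathcal{F},\mathcal{G})$-$n$-$r$-chaotic for $f$.
   Context: A $\delta$-chain of $f$ ($\delta>0$) is a finite sequence $(x_i)_{i=0}^k$, $k\ge1$, with $d(f(x_i),x_{i+1})\le\delta$ for $0\le i\le k-1$; it is a $\delta$-cycle if $x_0=x_k$, with length $k$. Write $x\to y$ if for every $\delta>0$ there is a $\delta$-chain from $x$ to $y$. Let $CR(f)=\{x\colon x\to x\}$; on $CR(f)$ let $x\leftrightarrow y$ iff $x\to y$ and $y\to x$; its classes are the chain components, forming $\mathcal{C}(f)$. For $C\in\mathcal{C}(f)$, $\delta>0$, let $m=m(C,\delta)$ be the gcd of the lengths of all $\delta$-cycles of $f|_C$, and for $x,y\in C$ let $x\sim_{C,\delta}y$ iff there is a $\delta$-chain of $f|_C$ from $x$ to $y$ of length divisible by $m$; $\mathcal{D}(C,\delta)$ is the set of its equivalence classes. Let $x\sim_C y$ iff $x\sim_{C,\delta}y$ for all $\delta>0$; $\mathcal{D}(C)$ is its set of classes. For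 $D\in\mathcal{D}(C)$, $D_\delta$ is the element of $\mathcal{D}(C,\delta)$ containing $D$. $W^s(C)=\{x\colon\lim_i d(f^i(x),C)=0\}$ and $V^s(D)=\bigcap_{\delta>0}\{x\in W^s(C)\colon\lim_i d(f^i(x),f^i(D_\delta))=0\}$. $f$ has the s-limit shadowing property if for every $\epsilon>0$ there is $\delta>0$ such that for every sequence $(x_i)_{i\ge0}$ with $d(f(x_i),x_{i+1})\le\delta$ for all $i$ and $d(f(x_i),x_{i+1})\to0$ there is $x\in X$ with $d(f^i(x),x_i)\le\epsilon$ for all $i$ and $d(f^i(x),x_i)\to0$. A Furstenberg family is a nonempty proper family $\mathcal{F}\subsetneq 2^{\mathbb{N}_0}$ closed under taking supersets; it is full if $\{i\in A\colon i\ge n\}\in\mathcal{F}$ for all $A\in\mathcal{F}$, $n\ge0$; translation invariant if $\{i+n\colon i\in A\}\in\mathcal{F}$ and $\{i\in\mathbb{N}_0\colon i+n\in A\}\in\mathcal{F}$ for all $A\in\mathcal{F}$, $n\ge0$. $f^{\times n}$ is the $n$-fold product map on $X^n$. $\mathcal{F}$ is compatible with $(X^n,f^{\times n})$ if for every open $U\subset X^n$ the set $\{z\in X^n\colon\{i\in\mathbb{N}_0\colon (f^{\times n})^i(z)\in U\}\in\mathcal{F}\}$ is a $G_\delta$-subset of $X^n$. $(x_1,\dots,x_n)$ is a $\delta$-distal $n$-tuple for $f$ if $\inf_{i\ge0}\min_{1\le j<k\le n}d(f^i(x_j),f^i(x_k))>\delta$. For $x_1,\dots,x_n\in X$, $r>0$: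 $S_f(x_1,\dots,x_n;r)=\{i\in\mathbb{N}_0\colon\min_{j<k}d(f^i(x_j),f^i(x_k))>r\}$ and $T_f(x_1,\dots,x_n;r)=\{i\in\mathbb{N}_0\colon\max_{j<k}d(f^i(x_j),f^i(x_k))<r\}$. $(x_1,\dots,x_n)$ is $(\mathcal{F},\mathcal{G})$-$r$-scrambled if $S_f(x_1,\dots,x_n;r)\in\mathcal{F}$ and $T_f(x_1,\dots,x_n;\epsilon)\in\mathcal{G}$ for all $\epsilon>0$. A nonempty $Y\subset X$ is generic $(\mathcal{F},\mathcal{G})$-$n$-$r$-chaotic for $f$ if the set of $(\mathcal{F},\mathcal{G})$-$r$-scrambled $n$-tuples in $Y^n$ is residual in $Y^n$ (contains a countable intersection of dense open subsets of $Y^n$). *)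

theory Defs
  imports "HOL-Analysis.Analysis"
begin

text \<open>Chains. A delta-chain of length k from x to y whose points all lie in S
  (take S = UNIV for chains of f, S = C for chains of f restricted to C).\<close>
definition chain_in :: "('a::metric_space \<Rightarrow> 'a) \<Rightarrow> 'a set \<Rightarrow> real \<Rightarrow> 'a \<Rightarrow> 'a \<Rightarrow> nat \<Rightarrow> bool" where
  "chain_in f S \<delta> x y k \<longleftrightarrow> k \<ge> 1 \<and> (\<exists>xs::nat \<Rightarrow> 'a. xs 0 = x \<and> xs k = y \<and>
      (\<forall>i\<le>k. xs i \<in> S) \<and> (\<forall>i<k. dist (f (xs i)) (xs (Suc i)) \<le> \<delta>))"

definition chain_to :: "('a::metric_space \<Rightarrow> 'a) \<Rightarrow> 'a \<Rightarrow> 'a \<Rightarrow> bool" where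
  "chain_to f x y \<longleftrightarrow> (\<forall>\<delta>>0. \<exists>k. chain_in f UNIV \<delta> x y k)"

definition CR :: "('a::metric_space \<Rightarrow> 'a) \<Rightarrow> 'a set" where
  "CR f = {x. chain_to f x x}"

definition chain_components :: "('a::metric_space \<Rightarrow> 'a) \<Rightarrow> 'a set set" where
  "chain_components f = CR f // {(x, y). x \<in> CR f \<and> y \<in> CR f \<and> chain_to f x y \<and> chain_to f y x}"

definition cyc_gcd :: "('a::metric_space \<Rightarrow> 'a) \<Rightarrow> 'a set \<Rightarrow> real \<Rightarrow> nat" where
  "cyc_gcd f C \<delta> = Gcd {k. \<exists>x. chain_in f C \<delta> x x k}"

definition rel_delta :: "('a::metric_space \<Rightarrow> 'a) \<Rightarrow> 'a set \<Rightarrow> real \<Rightarrow> 'a \<Rightarrow> 'a \<Rightarrow> bool" where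
  "rel_delta f C \<delta> x y \<longleftrightarrow> x \<in> C \<and> y \<in> C \<and> (\<exists>k. chain_in f C \<delta> x y k \<and> cyc_gcd f C \<delta> dvd k)"

definition D_delta_classes :: "('a::metric_space \<Rightarrow> 'a) \<Rightarrow> 'a set \<Rightarrow> real \<Rightarrow> 'a set set" where
  "D_delta_classes f C \<delta> = C // {(x, y). rel_delta f C \<delta> x y}"

definition D_classes :: "('a::metric_space \<Rightarrow> 'a) \<Rightarrow> 'a set \<Rightarrow> 'a set set" where
  "D_classes f C = C // {(x, y). x \<in> C \<and> y \<in> C \<and> (\<forall>\<delta>>0. rel_delta f C \<delta> x y)}"

definition D_sub :: "('a::metric_space \<Rightarrow> 'a) \<Rightarrow> 'a set \<Rightarrow> 'a set \<Rightarrow> real \<Rightarrow> 'a set" where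
  "D_sub f C D \<delta> = (THE E. E \<in> D_delta_classes f C \<delta> \<and> D \<subseteq> E)"

definition Ws :: "('a::metric_space \<Rightarrow> 'a) \<Rightarrow> 'a set \<Rightarrow> 'a set" where
  "Ws f C = {x. (\<lambda>i. infdist ((f ^^ i) x) C) \<longlonglongrightarrow> 0}"

definition Vs :: "('a::metric_space \<Rightarrow> 'a) \<Rightarrow> 'a set \<Rightarrow> 'a set \<Rightarrow> 'a set" where
  "Vs f C D = (\<Inter>\<delta>\<in>{\<delta>. \<delta> > 0}.
     {x \<in> Ws f C. (\<lambda>i. infdist ((f ^^ i) x) ((f ^^ i) ` D_sub f C D \<delta>)) \<longlonglongrightarrow> 0})"

definition s_limit_shadowing :: "('a::metric_space \<Rightarrow> 'a) \<Rightarrow> bool" where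
  "s_limit_shadowing f \<longleftrightarrow> (\<forall>\<epsilon>>0. \<exists>\<delta>>0. \<forall>xs::nat \<Rightarrow> 'a.
     (\<forall>i. dist (f (xs i)) (xs (Suc i)) \<le> \<delta>) \<and> (\<lambda>i. dist (f (xs i)) (xs (Suc i))) \<longlonglongrightarrow> 0 \<longrightarrow>
     (\<exists>x. (\<forall>i. dist ((f ^^ i) x) (xs i) \<le> \<epsilon>) \<and> (\<lambda>i. dist ((f ^^ i) x) (xs i)) \<longlonglongrightarrow> 0))"

definition furstenberg_family :: "nat set set \<Rightarrow> bool" where
  "furstenberg_family F \<longleftrightarrow> F \<noteq> {} \<and> F \<noteq> UNIV \<and> (\<forall>A B. A \<in> F \<and> A \<subseteq> B \<longrightarrow> B \<in> F)"

definition full_family :: "nat set set \<Rightarrow> bool" where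
  "full_family F \<longleftrightarrow> (\<forall>A\<in>F. \<forall>n. {i \<in> A. i \<ge> n} \<in> F)"

definition translation_invariant :: "nat set set \<Rightarrow> bool" where
  "translation_invariant F \<longleftrightarrow> (\<forall>A\<in>F. \<forall>n. (\<lambda>i. i + n) ` A \<in> F \<and> {i. i + n \<in> A} \<in> F)"

text \<open>n-tuples in X^n are functions on {..<n} (extensional), with the product topology.\<close>
definition prod_top :: "nat \<Rightarrow> (nat \<Rightarrow> 'a::topological_space) topology" where
  "prod_top n = product_topology (\<lambda>_. euclidean) {..<n}"

definition prod_map :: "('a \<Rightarrow> 'a) \<Rightarrow> nat \<Rightarrow> (nat \<Rightarrow> 'a) \<Rightarrow> (nat \<Rightarrow> 'a)" where
  "prod_map f n z = restrict (\<lambda>j. f (z j)) {..<n}"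

definition compatible :: "nat set set \<Rightarrow> ('a::topological_space \<Rightarrow> 'a) \<Rightarrow> nat \<Rightarrow> bool" where
  "compatible F f n \<longleftrightarrow> (\<forall>U. openin (prod_top n) U \<longrightarrow>
     gdelta_in (prod_top n) {z \<in> topspace (prod_top n). {i. (prod_map f n ^^ i) z \<in> U} \<in> F})"

definition pair_dists :: "('a::metric_space \<Rightarrow> 'a) \<Rightarrow> nat \<Rightarrow> (nat \<Rightarrow> 'a) \<Rightarrow> nat \<Rightarrow> real set" where
  "pair_dists f n x i = {dist ((f ^^ i) (x j)) ((f ^^ i) (x k)) | j k. j < k \<and> k < n}"

definition distal_tuple :: "('a::metric_space \<Rightarrow> 'a) \<Rightarrow> real \<Rightarrow> nat \<Rightarrow> (nat \<Rightarrow> 'a) \<Rightarrow> bool" where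
  "distal_tuple f \<delta> n x \<longleftrightarrow> (INF i. Min (pair_dists f n x i)) > \<delta>"

definition S_set :: "('a::metric_space \<Rightarrow> 'a) \<Rightarrow> nat \<Rightarrow> (nat \<Rightarrow> 'a) \<Rightarrow> real \<Rightarrow> nat set" where
  "S_set f n x r = {i. Min (pair_dists f n x i) > r}"

definition T_set :: "('a::metric_space \<Rightarrow> 'a) \<Rightarrow> nat \<Rightarrow> (nat \<Rightarrow> 'a) \<Rightarrow> real \<Rightarrow> nat set" where
  "T_set f n x r = {i. Max (pair_dists f n x i) < r}"

definition scrambled :: "nat set set \<Rightarrow> nat set set \<Rightarrow> ('a::metric_space \<Rightarrow> 'a) \<Rightarrow> nat \<Rightarrow> real \<Rightarrow> (nat \<Rightarrow> 'a) \<Rightarrow> bool" where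
  "scrambled F G f n r x \<longleftrightarrow> S_set f n x r \<in> F \<and> (\<forall>\<epsilon>>0. T_set f n x \<epsilon> \<in> G)"

definition residual_in :: "'b topology \<Rightarrow> 'b set \<Rightarrow> bool" where
  "residual_in T S \<longleftrightarrow> S \<subseteq> topspace T \<and> (\<exists>\<U>. countable \<U> \<and>
     (\<forall>U\<in>\<U>. openin T U \<and> T closure_of U = topspace T) \<and> topspace T \<inter> \<Inter>\<U> \<subseteq> S)"

definition generic_chaotic :: "nat set set \<Rightarrow> nat set set \<Rightarrow> ('a::metric_space \<Rightarrow> 'a) \<Rightarrow> nat \<Rightarrow> real \<Rightarrow> 'a set \<Rightarrow> bool" where
  "generic_chaotic F G f n r Y \<longleftrightarrow> Y \<noteq> {} \<and>
     residual_in (subtopology (prod_top n) (PiE {..<n} (\<lambda>_. Y)))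
       {z \<in> PiE {..<n} (\<lambda>_. Y). scrambled F G f n r z}"

end

theory Submission
  imports Defs
begin

(*
  Given y in V^s(E) and c in E, follow the orbit of y until it comes
  delta-close to the orbit of some point e of the delta-class of E. Within the chain component all
  sufficiently long chain lengths of the right residue modulo m(C,delta) occur, so a delta-chain in C
  leads from the orbit of e onto the orbit of c at exactly the matching time; s-limit shadowing turns
  this pseudo-orbit into a true orbit starting near y and asymptotic to c. Hence, in V^s(E)^n, the
  tuples asymptotic to any prescribed tuple of E are dense.

  Iterating the distal tuple in D into E and passing to a limit gives a tuple b in E whose orbits stay
  delta apart. Tuples asymptotic to b are r-separated from some time on, tuples asymptotic to (x,...,x)
  are eventually arbitrarily close, and fullness puts these cofinite sets of times into F and G.
  Compatibility makes the corresponding sets of tuples G-delta, so the scrambled tuples are residual.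
*)

section \<open>Chains\<close>

lemma chain_inI:
  assumes "k \<ge> 1" "xs 0 = x" "xs k = y" "\<And>i. i \<le> k \<Longrightarrow> xs i \<in> S"
    "\<And>i. i < k \<Longrightarrow> dist (f (xs i)) (xs (Suc i)) \<le> \<delta>"
  shows "chain_in f S \<delta> x y k"
  using assms unfolding chain_in_def by blast

lemma chain_inE:
  assumes "chain_in f S \<delta> x y k"
  obtains xs where "k \<ge> 1" "xs 0 = x" "xs k = y" "\<And>i. i \<le> k \<Longrightarrow> xs i \<in> S"
    "\<And>i. i < k \<Longrightarrow> dist (f (xs i)) (xs (Suc i)) \<le> \<delta>"
  using assms unfolding chain_in_def by blast

lemma chain_in_ends: "chain_in f S \<delta> x y k \<Longrightarrow> x \<in> S \<and> y \<in> S \<and> k \<ge> 1"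
  by (metis chain_inE le0 order_refl)

lemma chain_in_append:
  assumes "chain_in f S \<delta> x y k" "chain_in f S \<delta> y z l"
  shows "chain_in f S \<delta> x z (k + l)"
proof -
  obtain xs where xs: "k \<ge> 1" "xs 0 = x" "xs k = y" "\<And>i. i \<le> k \<Longrightarrow> xs i \<in> S"
    "\<And>i. i < k \<Longrightarrow> dist (f (xs i)) (xs (Suc i)) \<le> \<delta>" using chain_inE[OF assms(1)] by metis
  obtain ys where ys: "l \<ge> 1" "ys 0 = y" "ys l = z" "\<And>i. i \<le> l \<Longrightarrow> ys i \<in> S"
    "\<And>i. i < l \<Longrightarrow> dist (f (ys i)) (ys (Suc i)) \<le> \<delta>" using chain_inE[OF assms(2)] by metis
  define zs where "zs i = (if i \<le> k then xs i else ys (i - k))" for i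
  show ?thesis
  proof (rule chain_inI[where xs = zs])
    show "dist (f (zs i)) (zs (Suc i)) \<le> \<delta>" if "i < k + l" for i
    proof (cases "i < k")
      case True then show ?thesis using xs by (auto simp: zs_def)
    next
      case False
      then have "Suc i - k = Suc (i - k)" by auto
      then show ?thesis using False ys that xs(3) by (auto simp: zs_def)
    qed
  qed (use xs ys in \<open>auto simp: zs_def\<close>)
qed

lemma chain_in_mono:
  assumes "chain_in f S \<delta> x y k" "S \<subseteq> S'" "\<delta> \<le> \<delta>'"
  shows "chain_in f S' \<delta>' x y k"
  using assms unfolding chain_in_def by (blast intro: order_trans)

lemma chain_in_single: "x \<in> S \<Longrightarrow> y \<in> S \<Longrightarrow> dist (f x) y \<le> \<delta> \<Longrightarrow> chain_in f S \<delta> x y 1"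
  by (rule chain_inI[where xs="\<lambda>i. if i = 0 then x else y"]) auto

lemma chain_in_orbit:
  assumes "0 \<le> \<delta>" "k \<ge> 1" "\<And>i. i \<le> k \<Longrightarrow> (f ^^ i) x \<in> S"
  shows "chain_in f S \<delta> x ((f ^^ k) x) k"
  by (rule chain_inI[where xs="\<lambda>i. (f ^^ i) x"]) (use assms in auto)

lemma chain_in_segment:
  assumes "\<And>i. i < k \<Longrightarrow> dist (f (xs i)) (xs (Suc i)) \<le> \<delta>" "\<And>i. i \<le> k \<Longrightarrow> xs i \<in> S"
    "a < b" "b \<le> k"
  shows "chain_in f S \<delta> (xs a) (xs b) (b - a)"
  by (rule chain_inI[where xs="\<lambda>i. xs (a + i)"]) (use assms in auto)

lemma chain_in_perturb_start:
  assumes "chain_in f S \<delta> u y k" "w \<in> S" "dist (f w) (f u) \<le> \<eta>"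
  shows "chain_in f S (\<delta> + \<eta>) w y k"
proof -
  obtain xs where xs: "k \<ge> 1" "xs 0 = u" "xs k = y" "\<And>i. i \<le> k \<Longrightarrow> xs i \<in> S"
    "\<And>i. i < k \<Longrightarrow> dist (f (xs i)) (xs (Suc i)) \<le> \<delta>" using chain_inE[OF assms(1)] by metis
  have "\<eta> \<ge> 0" using assms(3) zero_le_dist order_trans by blast
  moreover have "dist (f w) (xs 1) \<le> \<delta> + \<eta>"
    using dist_triangle[of "f w" "xs 1" "f u"] assms(3) xs(5)[of 0] xs(1,2) by auto
  ultimately show ?thesis
    by (intro chain_inI[where xs="xs(0 := w)"]) (use xs assms in \<open>auto simp: add_increasing2\<close>)
qed

lemma chain_in_perturb_end:
  assumes "chain_in f S \<delta> x u k" "w \<in> S" "dist u w \<le> \<eta>"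
  shows "chain_in f S (\<delta> + \<eta>) x w k"
proof -
  obtain xs where xs: "k \<ge> 1" "xs 0 = x" "xs k = u" "\<And>i. i \<le> k \<Longrightarrow> xs i \<in> S"
    "\<And>i. i < k \<Longrightarrow> dist (f (xs i)) (xs (Suc i)) \<le> \<delta>" using chain_inE[OF assms(1)] by metis
  have "\<eta> \<ge> 0" using assms(3) zero_le_dist order_trans by blast
  moreover have "dist (f (xs (k - 1))) w \<le> \<delta> + \<eta>"
    using dist_triangle[of "f (xs (k - 1))" w u] assms(3) xs(5)[of "k - 1"] xs(1,3) by auto
  ultimately show ?thesis
    by (intro chain_inI[where xs="xs(k := w)"])
      (use xs assms in \<open>auto simp: add_increasing2 dest: less_imp_Suc_add\<close>)
qed

lemma chain_in_drop_first:
  assumes "chain_in f S \<delta> x y k" "k \<ge> 2"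
  obtains u where "dist (f x) u \<le> \<delta>" "chain_in f S \<delta> u y (k - 1)"
proof -
  obtain xs where xs: "k \<ge> 1" "xs 0 = x" "xs k = y" "\<And>i. i \<le> k \<Longrightarrow> xs i \<in> S"
    "\<And>i. i < k \<Longrightarrow> dist (f (xs i)) (xs (Suc i)) \<le> \<delta>" using chain_inE[OF assms(1)] by metis
  have "chain_in f S \<delta> (xs 1) y (k - 1)"
    by (rule chain_inI[where xs="\<lambda>i. xs (Suc i)"]) (use xs assms(2) in auto)
  moreover have "dist (f x) (xs 1) \<le> \<delta>" using xs(5)[of 0] xs(1,2) by auto
  ultimately show ?thesis using that by blast
qed

lemma chain_in_shadow:
  assumes "L \<ge> 1" "\<And>i. i < L \<Longrightarrow> dist (f (xs i)) (xs (Suc i)) \<le> e"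
    "\<And>i. i \<le> L \<Longrightarrow> ys i \<in> S" "\<And>i. i \<le> L \<Longrightarrow> dist (xs i) (ys i) < \<eta>"
    "\<And>u v. dist u v < \<eta> \<Longrightarrow> dist (f u) (f v) \<le> \<epsilon>"
  shows "chain_in f S (\<epsilon> + e + \<eta>) (ys 0) (ys L) L"
proof (rule chain_inI[where xs = ys])
  fix i assume i: "i < L"
  have "dist (f (ys i)) (ys (Suc i))
      \<le> dist (f (ys i)) (f (xs i)) + dist (f (xs i)) (xs (Suc i)) + dist (xs (Suc i)) (ys (Suc i))"
    using dist_triangle[of "f (ys i)" "ys (Suc i)" "f (xs i)"]
      dist_triangle[of "f (xs i)" "ys (Suc i)" "xs (Suc i)"] by linarith
  moreover have "dist (f (ys i)) (f (xs i)) \<le> \<epsilon>"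
    using assms(4,5) i by (simp add: dist_commute)
  ultimately show "dist (f (ys i)) (ys (Suc i)) \<le> \<epsilon> + e + \<eta>"
    using assms(2)[OF i] assms(4)[of "Suc i"] i by linarith
qed (use assms in auto)

lemma chain_points_on_loops:
  assumes xs: "\<And>i. i < L \<Longrightarrow> dist (f (xs i)) (xs (Suc i)) \<le> e" "xs 0 = x" "xs L = y"
    and yx: "chain_in f UNIV e y x l" and xx: "chain_in f UNIV e x x l'" and t: "t \<le> L"
  shows "(\<exists>k. chain_in f UNIV e x (xs t) k) \<and> (\<exists>k. chain_in f UNIV e (xs t) x k)"
proof
  show "\<exists>k. chain_in f UNIV e x (xs t) k"
  proof (cases "t = 0")
    case True then show ?thesis using xx xs(2) by auto
  next
    case False
    then have "chain_in f UNIV e (xs 0) (xs t) (t - 0)"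
      by (intro chain_in_segment[where k=L]) (use xs(1) t in auto)
    then show ?thesis using xs(2) by auto
  qed
  show "\<exists>k. chain_in f UNIV e (xs t) x k"
  proof (cases "t = L")
    case True then show ?thesis using yx xs(3) by auto
  next
    case False
    then have "chain_in f UNIV e (xs t) (xs L) (L - t)"
      by (intro chain_in_segment[where k=L]) (use xs(1) t in auto)
    then show ?thesis using chain_in_append[OF _ yx] xs(3) by auto
  qed
qed

lemma chain_to_trans: "chain_to f x y \<Longrightarrow> chain_to f y z \<Longrightarrow> chain_to f x z"
  unfolding chain_to_def by (meson chain_in_append)

lemma chain_to_step: "chain_to f x (f x)"
  unfolding chain_to_def by (auto intro!: exI chain_in_single)

section \<open>Chain components\<close>

definition chain_equiv :: "('a::metric_space \<Rightarrow> 'a) \<Rightarrow> ('a \<times> 'a) set" where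
  "chain_equiv f = {(x, y). x \<in> CR f \<and> y \<in> CR f \<and> chain_to f x y \<and> chain_to f y x}"

lemma equiv_chain_equiv: "equiv (CR f) (chain_equiv f)"
  unfolding equiv_def refl_on_def sym_def trans_def chain_equiv_def
  by (auto simp: CR_def intro: chain_to_trans)

lemma chain_components_eq: "chain_components f = CR f // chain_equiv f"
  by (simp add: chain_components_def chain_equiv_def)

lemma chain_component_iff:
  assumes "C \<in> chain_components f" "x \<in> C"
  shows "y \<in> C \<longleftrightarrow> chain_to f x y \<and> chain_to f y x"
proof -
  have "C = chain_equiv f `` {x}"
    using assms equiv_chain_equiv unfolding chain_components_eq
    by (metis Image_singleton_iff equiv_class_eq_iff quotientE)
  then show ?thesis
    by (auto simp: chain_equiv_def CR_def intro: chain_to_trans)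
qed

lemma chain_component_nonempty: "C \<in> chain_components f \<Longrightarrow> C \<noteq> {}"
  unfolding chain_components_eq using equiv_chain_equiv
  by (metis quotientE equiv_class_self empty_iff)

locale compact_system =
  fixes f :: "'a::metric_space \<Rightarrow> 'a"
  assumes compact_space: "compact (UNIV :: 'a set)" and continuous: "continuous_on UNIV f"

context compact_system
begin

lemma uniformly_continuous:
  "e > 0 \<Longrightarrow> \<exists>d>0. \<forall>x y. dist x y < d \<longrightarrow> dist (f x) (f y) < e"
  using compact_uniformly_continuous[OF continuous compact_space]
  unfolding uniformly_continuous_on_def by (metis UNIV_I dist_commute)

lemma continuous_funpow: "continuous_on UNIV (f ^^ i)"
  by (induction i) (auto intro: continuous_on_compose2[OF continuous])

lemma dist_funpow_ge_limit:
  assumes "u \<longlonglongrightarrow> x" "v \<longlonglongrightarrow> y" "\<And>k. \<delta> \<le> dist ((f ^^ i) (u k)) ((f ^^ i) (v k))"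
  shows "\<delta> \<le> dist ((f ^^ i) x) ((f ^^ i) y)"
proof (rule LIMSEQ_le_const)
  have cont: "isCont (f ^^ i) x" for x
    using continuous_funpow[of i] continuous_on_eq_continuous_at by blast
  show "(\<lambda>k. dist ((f ^^ i) (u k)) ((f ^^ i) (v k))) \<longlonglongrightarrow> dist ((f ^^ i) x) ((f ^^ i) y)"
    by (intro tendsto_dist isCont_tendsto_compose[OF cont] assms(1,2))
  show "\<exists>N. \<forall>k\<ge>N. \<delta> \<le> dist ((f ^^ i) (u k)) ((f ^^ i) (v k))" using assms(3) by blast
qed

lemma chain_to_back_step:
  assumes "x \<in> CR f"
  shows "chain_to f (f x) x"
  unfolding chain_to_def
proof (intro allI impI)
  fix e :: real assume e: "e > 0"
  obtain d where d: "d > 0" "\<forall>x y. dist x y < d \<longrightarrow> dist (f x) (f y) < e/2"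
    using uniformly_continuous[of "e/2"] e by auto
  define e' where "e' = min (d/2) (e/2)"
  have e': "e' > 0" "e' < d" "e' \<le> e/2" using d e by (auto simp: e'_def)
  obtain k where k: "chain_in f UNIV e' x x k"
    using assms e' unfolding CR_def chain_to_def by auto
  \<comment> \<open>Doubling the loop makes its length at least 2, so a first step can be dropped.\<close>
  have "k + k \<ge> 2" using chain_in_ends[OF k] by auto
  then obtain u where u: "dist (f x) u \<le> e'" "chain_in f UNIV e' u x (k + k - 1)"
    using chain_in_drop_first[OF chain_in_append[OF k k]] by blast
  have "dist (f (f x)) (f u) \<le> e/2" using d u(1) e' by (meson less_eq_real_def order_le_less_trans)
  from chain_in_perturb_start[OF u(2) _ this]
  have "chain_in f UNIV e (f x) x (k + k - 1)"
    by (rule chain_in_mono) (use e' in auto)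
  then show "\<exists>k. chain_in f UNIV e (f x) x k" ..
qed

lemma chain_to_of_near_loops:
  assumes "\<And>e. e > 0 \<Longrightarrow> \<exists>u. dist u l < e \<and> (\<exists>k. chain_in f UNIV e x u k) \<and> (\<exists>k. chain_in f UNIV e u x k)"
  shows "chain_to f x l \<and> chain_to f l x"
  unfolding chain_to_def
proof (intro conjI allI impI)
  fix e :: real assume e: "e > 0"
  obtain u k where "dist u l < e/2" "chain_in f UNIV (e/2) x u k"
    using assms[of "e/2"] e by auto
  from chain_in_perturb_end[OF this(2) _ less_imp_le[OF this(1)]]
  show "\<exists>k. chain_in f UNIV e x l k" by auto
next
  fix e :: real assume e: "e > 0"
  obtain d where d: "d > 0" "\<forall>x y. dist x y < d \<longrightarrow> dist (f x) (f y) < e/2"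
    using uniformly_continuous[of "e/2"] e by auto
  obtain u k where u: "dist u l < min d (e/2)" "chain_in f UNIV (min d (e/2)) u x k"
    using assms[of "min d (e/2)"] d e by auto
  have "chain_in f UNIV (e/2) u x k" by (rule chain_in_mono[OF u(2)]) auto
  moreover have "dist (f l) (f u) \<le> e/2" using d u(1) by (metis dist_commute less_eq_real_def min_less_iff_conj)
  ultimately show "\<exists>k. chain_in f UNIV e l x k" using chain_in_perturb_start by fastforce
qed

lemma chain_loops_near_chain_class:
  assumes "\<eta> > 0"
  shows "\<exists>e>0. \<forall>u. (\<exists>k. chain_in f UNIV e x u k) \<and> (\<exists>k. chain_in f UNIV e u x k) \<longrightarrow>
    (\<exists>z. chain_to f x z \<and> chain_to f z x \<and> dist u z < \<eta>)"
proof (rule ccontr)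
  define A where "A e = {u. (\<exists>k. chain_in f UNIV e x u k) \<and> (\<exists>k. chain_in f UNIV e u x k)}" for e
  have A_mono: "A e \<subseteq> A e'" if "e \<le> e'" for e e'
    unfolding A_def using chain_in_mono[of f UNIV e _ _ _ UNIV e'] that by blast
  assume contra: "\<not> ?thesis"
  have "\<exists>u. u \<in> A (1 / Suc i) \<and> (\<forall>z. chain_to f x z \<and> chain_to f z x \<longrightarrow> \<eta> \<le> dist u z)" for i
  proof -
    have "(1::real) / Suc i > 0" by simp
    then show ?thesis using contra unfolding A_def not_less[symmetric] by blast
  qed
  then obtain u where u: "\<And>i. u i \<in> A (1 / Suc i)"
    and far: "\<And>i z. chain_to f x z \<Longrightarrow> chain_to f z x \<Longrightarrow> \<eta> \<le> dist (u i) z"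
    by metis
  obtain l r where r: "strict_mono r" and lim: "(u \<circ> r) \<longlonglongrightarrow> l"
    using compact_imp_seq_compact[OF compact_space] unfolding seq_compact_def by blast
  have "\<exists>v. dist v l < e \<and> v \<in> A e" if e: "e > 0" for e
  proof -
    have "\<forall>\<^sub>F i in sequentially. dist (u (r i)) l < e"
      using lim e unfolding tendsto_iff by (simp add: o_def)
    moreover have "\<forall>\<^sub>F i in sequentially. 1 / real (Suc (r i)) < e"
      using LIMSEQ_subseq_LIMSEQ[OF LIMSEQ_inverse_real_of_nat r] e unfolding tendsto_iff
      by (auto simp: o_def inverse_eq_divide elim!: eventually_mono)
    ultimately have "\<forall>\<^sub>F i in sequentially. dist (u (r i)) l < e \<and> 1 / real (Suc (r i)) < e"
      by (rule eventually_conj)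
    then obtain i where "dist (u (r i)) l < e" and i: "1 / real (Suc (r i)) < e"
      unfolding eventually_sequentially by auto
    moreover have "u (r i) \<in> A e" using u[of "r i"] A_mono[of "1 / real (Suc (r i))" e] i by auto
    ultimately show ?thesis by blast
  qed
  then have "chain_to f x l \<and> chain_to f l x" by (intro chain_to_of_near_loops) (auto simp: A_def)
  moreover obtain i where "dist (u (r i)) l < \<eta>"
    using lim assms unfolding lim_sequentially by fastforce
  ultimately show False using far[of l "r i"] by auto
qed

end

locale chain_component = compact_system +
  fixes C assumes component: "C \<in> chain_components f"

context chain_component
begin

lemma chain_component_image:
  assumes x: "x \<in> C"
  shows "f x \<in> C"
proof -
  have "x \<in> CR f" using chain_component_iff[OF component x] x by (simp add: CR_def)
  then show ?thesis using chain_component_iff[OF component x] chain_to_back_step chain_to_step by blast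
qed

lemma chain_component_funpow: "x \<in> C \<Longrightarrow> (f ^^ i) x \<in> C"
  by (induction i) (auto intro: chain_component_image)

lemma chain_component_closed: "closed C"
  unfolding closed_sequential_limits
proof (intro allI impI, elim conjE)
  fix xs l assume xs: "\<forall>n. xs n \<in> C" and lim: "xs \<longlonglongrightarrow> l"
  have "chain_to f l (xs 0)"
    unfolding chain_to_def
  proof (intro allI impI)
    fix e :: real assume e: "e > 0"
    obtain d where d: "d > 0" "\<forall>x y. dist x y < d \<longrightarrow> dist (f x) (f y) < e/2"
      using uniformly_continuous[of "e/2"] e by auto
    obtain k where "dist (xs k) l < d" using lim d(1) unfolding lim_sequentially
      by (metis order_refl)
    then have dk: "dist (f l) (f (xs k)) \<le> e/2" using d by (metis dist_commute less_eq_real_def)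
    obtain m where "chain_in f UNIV (e/2) (xs k) (xs 0) m"
      using chain_component_iff[OF component, of "xs k"] xs e unfolding chain_to_def by (meson half_gt_zero)
    from chain_in_perturb_start[OF this _ dk] show "\<exists>k. chain_in f UNIV e l (xs 0) k" by auto
  qed
  moreover have "chain_to f (xs 0) l"
    unfolding chain_to_def
  proof (intro allI impI)
    fix e :: real assume e: "e > 0"
    obtain k where dk: "dist (xs k) l < e/2" using lim e unfolding lim_sequentially
      by (metis order_refl half_gt_zero)
    obtain m where "chain_in f UNIV (e/2) (xs 0) (xs k) m"
      using chain_component_iff[OF component, of "xs 0"] xs e unfolding chain_to_def by (meson half_gt_zero)
    from chain_in_perturb_end[OF this _ less_imp_le[OF dk]]
    show "\<exists>k. chain_in f UNIV e (xs 0) l k" by auto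
  qed
  ultimately show "l \<in> C" using chain_component_iff[OF component, of "xs 0"] xs by auto
qed

lemma chain_component_chain_in:
  assumes x: "x \<in> C" and y: "y \<in> C" and \<delta>: "\<delta> > 0"
  obtains k where "chain_in f C \<delta> x y k"
proof -
  obtain d where d: "d > 0" "\<forall>u v. dist u v < d \<longrightarrow> dist (f u) (f v) < \<delta>/3"
    using uniformly_continuous[of "\<delta>/3"] \<delta> by auto
  define \<eta> where "\<eta> = min d (\<delta>/3)"
  have \<eta>: "\<eta> > 0" "\<eta> \<le> \<delta>/3" "\<And>u v. dist u v < \<eta> \<Longrightarrow> dist (f u) (f v) \<le> \<delta>/3"
    using d \<delta> by (auto simp: \<eta>_def less_imp_le)
  obtain e where e: "e > 0" and near: "\<And>u. (\<exists>k. chain_in f UNIV e x u k) \<Longrightarrow> (\<exists>k. chain_in f UNIV e u x k)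
      \<Longrightarrow> \<exists>z. chain_to f x z \<and> chain_to f z x \<and> dist u z < \<eta>"
    using chain_loops_near_chain_class[OF \<eta>(1), of x] by blast
  define e' where "e' = min e (\<delta>/3)"
  have e': "e' > 0" "e' \<le> e" "e' \<le> \<delta>/3" using e \<delta> by (auto simp: e'_def)
  have xy: "chain_to f x x" "chain_to f x y" "chain_to f y x"
    using chain_component_iff[OF component x] x y by auto
  obtain L where "chain_in f UNIV e' x y L" using xy(2) e' unfolding chain_to_def by auto
  then obtain xs where xs: "L \<ge> 1" "xs 0 = x" "xs L = y"
    "\<And>i. i < L \<Longrightarrow> dist (f (xs i)) (xs (Suc i)) \<le> e'"
    by (auto elim: chain_inE)
  obtain yx where yx: "chain_in f UNIV e' y x yx" using xy(3) e' unfolding chain_to_def by auto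
  obtain xx where xx: "chain_in f UNIV e' x x xx" using xy(1) e' unfolding chain_to_def by auto
  \<comment> \<open>The points of an \<open>e'\<close>-chain from \<open>x\<close> to \<open>y\<close> lie on \<open>e'\<close>-loops through \<open>x\<close>, hence near
    the chain class of \<open>x\<close>, which is \<open>C\<close>; moving them into \<open>C\<close> costs little by uniform continuity.\<close>
  have "\<exists>z. z \<in> C \<and> dist (xs t) z < \<eta>" if t: "t \<le> L" for t
  proof -
    obtain z where "chain_to f x z" "chain_to f z x" "dist (xs t) z < \<eta>"
      using near chain_points_on_loops[OF xs(4,2,3) yx xx t] chain_in_mono[OF _ subset_refl e'(2)] by meson
    then show ?thesis using chain_component_iff[OF component x] by blast
  qed
  then obtain z where z: "\<And>t. t \<le> L \<Longrightarrow> z t \<in> C \<and> dist (xs t) (z t) < \<eta>" by metis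
  define ys where "ys t = (if t = 0 then x else if t = L then y else z t)" for t
  have "chain_in f C (\<delta>/3 + e' + \<eta>) (ys 0) (ys L) L"
    by (rule chain_in_shadow[where f=f and xs=xs and ys=ys]) (use xs z x y \<eta> in \<open>auto simp: ys_def\<close>)
  then have "chain_in f C (\<delta>/3 + e' + \<eta>) x y L" using xs(1) by (simp add: ys_def)
  then have "chain_in f C \<delta> x y L" by (rule chain_in_mono) (use e' \<eta> in auto)
  then show ?thesis by (rule that)
qed

end

section \<open>Additive semigroups of natural numbers\<close>

lemma add_closed_mult_mem:
  fixes S :: "nat set"
  assumes add: "\<And>a b. a \<in> S \<Longrightarrow> b \<in> S \<Longrightarrow> a + b \<in> S" and "x \<in> S" "c \<ge> 1"
  shows "c * x \<in> S"
proof -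
  have "Suc d * x \<in> S" for d by (induction d) (use assms in auto)
  then show ?thesis using \<open>c \<ge> 1\<close> by (metis Suc_pred' less_le_trans zero_less_one)
qed

lemma add_closed_least_gap_dvd:
  fixes S :: "nat set"
  assumes add: "\<And>a b. a \<in> S \<Longrightarrow> b \<in> S \<Longrightarrow> a + b \<in> S"
    and gap: "b \<in> S" "b + h \<in> S" "h > 0"
    and least: "\<And>a a' d. a \<in> S \<Longrightarrow> a' \<in> S \<Longrightarrow> a' = a + d \<Longrightarrow> d > 0 \<Longrightarrow> h \<le> d"
    and s: "s \<in> S"
  shows "h dvd s"
proof (rule ccontr)
  assume "\<not> h dvd s"
  define q where "q = s div h"
  define \<rho> where "\<rho> = s mod h"
  have \<rho>: "\<rho> > 0" "\<rho> < h" using \<open>\<not> h dvd s\<close> gap(3) by (auto simp: \<rho>_def mod_greater_zero_iff_not_dvd)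
  have s_eq: "s = q * h + \<rho>" by (simp add: q_def \<rho>_def)
  \<comment> \<open>The remainder \<open>\<rho>\<close> is itself a gap of \<open>S\<close>, contradicting the minimality of \<open>h\<close>.\<close>
  have "\<exists>a\<in>S. \<exists>a'\<in>S. a' = a + \<rho>"
  proof (cases "q = 0")
    case True
    then show ?thesis using s_eq add[OF s s] s by auto
  next
    case False
    have "s + q * b \<in> S" using add[OF s add_closed_mult_mem[OF add gap(1), of q]] False by auto
    moreover have "q * (b + h) \<in> S" using add_closed_mult_mem[OF add gap(2), of q] False by auto
    moreover have "s + q * b = q * (b + h) + \<rho>" using s_eq by (simp add: algebra_simps)
    ultimately show ?thesis by metis
  qed
  then obtain a a' where "a \<in> S" "a' \<in> S" "a' = a + \<rho>" by blast
  then have "h \<le> \<rho>" using least \<rho>(1) by blast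
  then show False using \<rho>(2) by simp
qed

lemma add_closed_large_multiples:
  fixes S :: "nat set"
  assumes add: "\<And>a b. a \<in> S \<Longrightarrow> b \<in> S \<Longrightarrow> a + b \<in> S"
    and gap: "u * h \<in> S" "u * h + h \<in> S" "u \<ge> 1" and k: "k \<ge> u * u"
  shows "k * h \<in> S"
proof -
  define q where "q = k div u"
  define \<rho> where "\<rho> = k mod u"
  have k_eq: "k = q * u + \<rho>" by (simp add: q_def \<rho>_def)
  have "\<rho> < u" using gap(3) by (simp add: \<rho>_def)
  moreover have "q \<ge> u" unfolding q_def using k gap(3)
    by (metis div_le_mono nonzero_mult_div_cancel_right not_one_le_zero)
  ultimately have "q - \<rho> \<ge> 1" by linarith
  define t where "t = q - \<rho>"
  have t: "q = \<rho> + t" "t \<ge> 1" using \<open>q - \<rho> \<ge> 1\<close> by (auto simp: t_def)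
  then have B: "t * (u * h) \<in> S" by (intro add_closed_mult_mem[OF add gap(1)])
  have eq: "k * h = \<rho> * (u * h + h) + t * (u * h)"
    using k_eq t(1) by (simp add: algebra_simps)
  show ?thesis
  proof (cases "\<rho> = 0")
    case True
    then have "k * h = t * (u * h)" using eq by simp
    then show ?thesis using B by (simp only:)
  next
    case False
    then have "\<rho> * (u * h + h) \<in> S" using add_closed_mult_mem[OF add gap(2), of \<rho>] by auto
    then have "\<rho> * (u * h + h) + t * (u * h) \<in> S" using add B by blast
    then show ?thesis using eq by (simp only:)
  qed
qed

lemma add_closed_eventually_multiples_Gcd:
  fixes S :: "nat set"
  assumes add: "\<And>a b. a \<in> S \<Longrightarrow> b \<in> S \<Longrightarrow> a + b \<in> S" and "0 \<notin> S" "s0 \<in> S"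
  obtains k0 where "\<And>k. k \<ge> k0 \<Longrightarrow> k * Gcd S \<in> S"
proof -
  define P where "P d \<longleftrightarrow> d > 0 \<and> (\<exists>a\<in>S. \<exists>a'\<in>S. a' = a + d)" for d
  have "s0 > 0" using assms(2,3) by (cases s0) auto
  then have "P s0" unfolding P_def using add[OF assms(3) assms(3)] assms(3) by blast
  define h where "h = (LEAST d. P d)"
  have "P h" unfolding h_def by (rule LeastI[of P s0]) fact
  then obtain b where b: "b \<in> S" "b + h \<in> S" "h > 0" unfolding P_def by auto
  have least: "\<And>a a' d. a \<in> S \<Longrightarrow> a' \<in> S \<Longrightarrow> a' = a + d \<Longrightarrow> d > 0 \<Longrightarrow> h \<le> d"
    unfolding h_def by (rule Least_le) (auto simp: P_def)
  have dvd: "h dvd s" if "s \<in> S" for s by (rule add_closed_least_gap_dvd[OF add b least that])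
  have "Gcd S dvd h" using Gcd_dvd[OF b(1)] Gcd_dvd[OF b(2)] by (simp add: dvd_add_right_iff)
  then have h: "h = Gcd S" using dvd by (simp add: Gcd_greatest dvd_antisym)
  obtain u where u: "b = u * h" using dvd[OF b(1)] by (metis dvd_def mult.commute)
  have "u \<ge> 1" using b(1) u \<open>0 \<notin> S\<close> by (cases u) auto
  then have "k * Gcd S \<in> S" if "k \<ge> u * u" for k
    using add_closed_large_multiples[OF add _ _ _ that, of h] b u h by simp
  then show ?thesis using that by blast
qed

lemma mod_eq_if_dvd_add_common:
  fixes k l b m :: nat
  assumes "m dvd k + b" "m dvd l + b"
  shows "k mod m = l mod m"
proof -
  obtain s t where "k + b = m * s" "l + b = m * t" using assms by (auto elim!: dvdE)
  then have "k + m * t = l + m * s" by linarith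
  then show ?thesis by (auto simp: nat_mod_eq_iff)
qed

section \<open>Cyclic classes\<close>

lemma cyc_gcd_dvd: "chain_in f C \<delta> x x k \<Longrightarrow> cyc_gcd f C \<delta> dvd k"
  unfolding cyc_gcd_def by (rule Gcd_dvd) auto

lemma cyc_gcd_dvd_mono:
  assumes "\<delta>1 \<le> \<delta>2"
  shows "cyc_gcd f C \<delta>2 dvd cyc_gcd f C \<delta>1"
  unfolding cyc_gcd_def[of f C \<delta>1]
proof (rule Gcd_greatest)
  fix k assume "k \<in> {k. \<exists>x. chain_in f C \<delta>1 x x k}"
  then obtain x where "chain_in f C \<delta>1 x x k" by auto
  then show "cyc_gcd f C \<delta>2 dvd k" by (intro cyc_gcd_dvd chain_in_mono[OF _ subset_refl assms])
qed

lemma rel_delta_trans: "rel_delta f C \<delta> x y \<Longrightarrow> rel_delta f C \<delta> y z \<Longrightarrow> rel_delta f C \<delta> x z"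
  unfolding rel_delta_def by (metis chain_in_append dvd_add)

lemma rel_delta_mono: "rel_delta f C \<delta>1 x y \<Longrightarrow> \<delta>1 \<le> \<delta>2 \<Longrightarrow> rel_delta f C \<delta>2 x y"
  unfolding rel_delta_def by (meson chain_in_mono cyc_gcd_dvd_mono dvd_trans subset_refl)

definition delta_class :: "('a::metric_space \<Rightarrow> 'a) \<Rightarrow> 'a set \<Rightarrow> real \<Rightarrow> 'a \<Rightarrow> 'a set" where
  "delta_class f C \<delta> x = {y. rel_delta f C \<delta> x y}"

definition cyclic_class :: "('a::metric_space \<Rightarrow> 'a) \<Rightarrow> 'a set \<Rightarrow> 'a \<Rightarrow> 'a set" where
  "cyclic_class f C x = {y. \<forall>\<delta>>0. rel_delta f C \<delta> x y}"

lemma cyclic_class_subset_delta_class: "\<delta> > 0 \<Longrightarrow> cyclic_class f C x \<subseteq> delta_class f C \<delta> x"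
  by (auto simp: cyclic_class_def delta_class_def)

lemma cyclic_class_subset: "cyclic_class f C x \<subseteq> C"
  by (auto simp: cyclic_class_def rel_delta_def dest: spec[of _ 1])

lemma D_classes_eq: "D_classes f C = cyclic_class f C ` C"
proof -
  have "{(x, y). x \<in> C \<and> y \<in> C \<and> (\<forall>\<delta>>0. rel_delta f C \<delta> x y)} `` {x} = cyclic_class f C x"
    if "x \<in> C" for x
    using that cyclic_class_subset[of f C x] by (auto simp: cyclic_class_def)
  then show ?thesis unfolding D_classes_def quotient_def by auto
qed

context chain_component
begin

abbreviation m :: "real \<Rightarrow> nat" where "m \<delta> \<equiv> cyc_gcd f C \<delta>"

lemma cyc_gcd_pos:
  assumes "\<delta> > 0"
  shows "m \<delta> > 0"
proof -
  obtain x where x: "x \<in> C" using chain_component_nonempty[OF component] by auto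
  obtain k where k: "chain_in f C \<delta> x x k" using chain_component_chain_in[OF x x assms] .
  then show ?thesis using cyc_gcd_dvd[OF k] chain_in_ends[OF k] by (metis dvd_0_left_iff gr0I not_one_le_zero)
qed

lemma chain_in_back:
  assumes "chain_in f C \<delta> x y k" "\<delta> > 0"
  obtains l where "chain_in f C \<delta> y x l" "m \<delta> dvd k + l"
proof -
  obtain l where l: "chain_in f C \<delta> y x l"
    using chain_component_chain_in[OF _ _ assms(2)] chain_in_ends[OF assms(1)] by metis
  show ?thesis by (rule that[OF l cyc_gcd_dvd[OF chain_in_append[OF assms(1) l]]])
qed

lemma rel_delta_refl: "x \<in> C \<Longrightarrow> \<delta> > 0 \<Longrightarrow> rel_delta f C \<delta> x x"
  unfolding rel_delta_def by (meson chain_component_chain_in cyc_gcd_dvd)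

lemma rel_delta_sym:
  assumes "rel_delta f C \<delta> x y" "\<delta> > 0"
  shows "rel_delta f C \<delta> y x"
proof -
  obtain k where k: "chain_in f C \<delta> x y k" "m \<delta> dvd k" using assms(1) by (auto simp: rel_delta_def)
  obtain l where "chain_in f C \<delta> y x l" "m \<delta> dvd k + l" by (rule chain_in_back[OF k(1) assms(2)])
  then show ?thesis using k(2) assms(1) by (auto simp: rel_delta_def dvd_add_right_iff)
qed

lemma equiv_rel_delta:
  assumes "\<delta> > 0"
  shows "equiv C {(x, y). rel_delta f C \<delta> x y}"
proof (rule equivI)
  show "{(x, y). rel_delta f C \<delta> x y} \<subseteq> C \<times> C" by (auto simp: rel_delta_def)
  show "refl_on C {(x, y). rel_delta f C \<delta> x y}"
    using rel_delta_refl assms by (auto simp: refl_on_def rel_delta_def)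
  show "sym {(x, y). rel_delta f C \<delta> x y}" using rel_delta_sym assms by (auto simp: sym_def)
  show "trans {(x, y). rel_delta f C \<delta> x y}" using rel_delta_trans by (auto simp: trans_def)
qed

lemma self_in_cyclic_class: "x \<in> C \<Longrightarrow> x \<in> cyclic_class f C x"
  by (simp add: cyclic_class_def rel_delta_refl)

lemma D_sub_cyclic_class:
  assumes "x \<in> C" "\<delta> > 0"
  shows "D_sub f C (cyclic_class f C x) \<delta> = delta_class f C \<delta> x"
  unfolding D_sub_def
proof (rule the_equality)
  have "delta_class f C \<delta> x = {(x, y). rel_delta f C \<delta> x y} `` {x}"
    by (auto simp: delta_class_def)
  then have "delta_class f C \<delta> x \<in> D_delta_classes f C \<delta>"
    unfolding D_delta_classes_def using quotientI[OF assms(1)] by metis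
  then show "delta_class f C \<delta> x \<in> D_delta_classes f C \<delta> \<and> cyclic_class f C x \<subseteq> delta_class f C \<delta> x"
    using cyclic_class_subset_delta_class[OF assms(2)] by blast
  fix E assume E: "E \<in> D_delta_classes f C \<delta> \<and> cyclic_class f C x \<subseteq> E"
  then have "x \<in> E" using self_in_cyclic_class[OF assms(1)] by auto
  then show "E = delta_class f C \<delta> x"
    using E equiv_rel_delta[OF assms(2)] unfolding D_delta_classes_def
    by (auto simp: delta_class_def elim!: quotientE dest: equiv_class_eq)
qed

lemma cycle_lengths_eventually:
  assumes p: "p \<in> C" and \<delta>: "\<delta> > 0"
  obtains k0 where "\<And>k. k \<ge> k0 \<Longrightarrow> chain_in f C \<delta> p p (k * m \<delta>)"
proof -
  define S where "S = {k. chain_in f C \<delta> p p k}"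
  obtain s0 where s0: "s0 \<in> S" using chain_component_chain_in[OF p p \<delta>] unfolding S_def by auto
  have add: "\<And>a b. a \<in> S \<Longrightarrow> b \<in> S \<Longrightarrow> a + b \<in> S" unfolding S_def using chain_in_append by blast
  have "0 \<notin> S" unfolding S_def using chain_in_ends by fastforce
  have "m \<delta> dvd Gcd S" by (rule Gcd_greatest) (auto simp: S_def cyc_gcd_dvd)
  moreover have "Gcd S dvd m \<delta>" unfolding cyc_gcd_def
  proof (rule Gcd_greatest)
    fix \<beta> assume "\<beta> \<in> {k. \<exists>x. chain_in f C \<delta> x x k}"
    then obtain c where c: "chain_in f C \<delta> c c \<beta>" by auto
    have cC: "c \<in> C" using chain_in_ends[OF c] by auto
    obtain \<alpha> where \<alpha>: "chain_in f C \<delta> p c \<alpha>" using chain_component_chain_in[OF p cC \<delta>] .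
    obtain \<alpha>' where \<alpha>': "chain_in f C \<delta> c p \<alpha>'" using chain_component_chain_in[OF cC p \<delta>] .
    \<comment> \<open>Both the loop \<open>p \<rightarrow> c \<rightarrow> p\<close> and its variant winding once around the cycle at \<open>c\<close> lie in \<open>S\<close>.\<close>
    have loop: "\<alpha> + \<alpha>' \<in> S" using chain_in_append[OF \<alpha> \<alpha>'] unfolding S_def by simp
    have "\<beta> + (\<alpha> + \<alpha>') \<in> S"
      using chain_in_append[OF chain_in_append[OF \<alpha> c] \<alpha>'] unfolding S_def by (simp add: ac_simps)
    then show "Gcd S dvd \<beta>" using dvd_add_left_iff[OF Gcd_dvd[OF loop]] Gcd_dvd by blast
  qed
  ultimately have "Gcd S = m \<delta>" by (simp add: dvd_antisym)
  moreover obtain k0 where "\<And>k. k \<ge> k0 \<Longrightarrow> k * Gcd S \<in> S"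
    using add_closed_eventually_multiples_Gcd[OF add \<open>0 \<notin> S\<close> s0] by blast
  ultimately have "\<And>k. k \<ge> k0 \<Longrightarrow> chain_in f C \<delta> p p (k * m \<delta>)" unfolding S_def by simp
  then show ?thesis by (rule that)
qed

lemma chain_lengths_bounded:
  assumes p: "p \<in> C" and \<delta>: "\<delta> > 0"
  obtains B where "\<And>q. q \<in> C \<Longrightarrow> \<exists>l\<le>B. chain_in f C \<delta> p q l"
proof -
  have cpt: "compact C"
    using compact_Int_closed[OF compact_space chain_component_closed] by simp
  have "C \<subseteq> (\<Union>c\<in>C. ball c (\<delta>/2))" using \<delta> by (auto intro: UN_I)
  then obtain T where T: "T \<subseteq> C" "finite T" "C \<subseteq> (\<Union>c\<in>T. ball c (\<delta>/2))"
    using compactE_image[of C C "\<lambda>c. ball c (\<delta>/2)", OF cpt open_ball] by blast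
  have "\<exists>l. chain_in f C (\<delta>/2) p c l" if "c \<in> T" for c
  proof -
    have "c \<in> C" using T(1) that by blast
    then obtain l where "chain_in f C (\<delta>/2) p c l"
      using chain_component_chain_in[OF p _ half_gt_zero[OF \<delta>]] by blast
    then show ?thesis ..
  qed
  then obtain l where l: "\<And>c. c \<in> T \<Longrightarrow> chain_in f C (\<delta>/2) p c (l c)" by metis
  have "\<exists>l'\<le>Max (l ` T). chain_in f C \<delta> p q l'" if q: "q \<in> C" for q
  proof -
    obtain c where c: "c \<in> T" "dist c q < \<delta>/2" using T(3) q by auto
    have "chain_in f C (\<delta>/2 + \<delta>/2) p q (l c)"
      by (rule chain_in_perturb_end[OF l[OF c(1)] q]) (use c in auto)
    moreover have "l c \<le> Max (l ` T)" using T(2) c(1) by auto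
    ultimately show ?thesis by auto
  qed
  then show ?thesis using that by blast
qed

lemma chain_lengths_mod:
  assumes "chain_in f C \<delta> x y k" "chain_in f C \<delta> x y l" "\<delta> > 0"
  shows "k mod m \<delta> = l mod m \<delta>"
proof -
  obtain b where b: "chain_in f C \<delta> y x b" "m \<delta> dvd k + b" by (rule chain_in_back[OF assms(1,3)])
  have "m \<delta> dvd l + b" by (rule cyc_gcd_dvd[OF chain_in_append[OF assms(2) b(1)]])
  with b(2) show ?thesis by (rule mod_eq_if_dvd_add_common)
qed

lemma chain_in_any_long_length:
  assumes p: "p \<in> C" and \<delta>: "\<delta> > 0"
  obtains K where "\<And>q l L. chain_in f C \<delta> p q l \<Longrightarrow> K \<le> L \<Longrightarrow> L mod m \<delta> = l mod m \<delta>
    \<Longrightarrow> chain_in f C \<delta> p q L"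
proof -
  obtain k0 where k0: "\<And>k. k \<ge> k0 \<Longrightarrow> chain_in f C \<delta> p p (k * m \<delta>)"
    using cycle_lengths_eventually[OF p \<delta>] by blast
  obtain B where B: "\<And>q. q \<in> C \<Longrightarrow> \<exists>l\<le>B. chain_in f C \<delta> p q l"
    using chain_lengths_bounded[OF p \<delta>] by blast
  have "chain_in f C \<delta> p q L"
    if ch: "chain_in f C \<delta> p q l" and L: "B + k0 * m \<delta> \<le> L" and mod: "L mod m \<delta> = l mod m \<delta>" for q l L
  proof -
    obtain l' where l': "l' \<le> B" "chain_in f C \<delta> p q l'" using B chain_in_ends[OF ch] by blast
    \<comment> \<open>Pad a short chain \<open>p \<rightarrow> q\<close> by a suitable number of cycles at \<open>p\<close>.\<close>
    have "L mod m \<delta> = l' mod m \<delta>" using mod chain_lengths_mod[OF ch l'(2) \<delta>] by simp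
    moreover have "L \<ge> l'" using L l'(1) by linarith
    ultimately obtain t where t: "L = l' + m \<delta> * t" by (rule mod_eq_nat1E)
    then have "k0 * m \<delta> \<le> m \<delta> * t" using L l'(1) by linarith
    then have "t \<ge> k0" using cyc_gcd_pos[OF \<delta>] by (simp add: mult.commute[of k0])
    then have "chain_in f C \<delta> p q (t * m \<delta> + l')" using chain_in_append[OF k0 l'(2)] by blast
    then show ?thesis using t by (simp add: ac_simps)
  qed
  then show ?thesis by (rule that)
qed

lemma cyc_gcd_dvd_orbit_return:
  assumes "x \<in> C" "\<delta> > 0" "chain_in f C \<delta> ((f ^^ N) x) x u"
  shows "m \<delta> dvd u + N"
proof (cases "N = 0")
  case True then show ?thesis using assms(3) cyc_gcd_dvd by simp
next
  case False
  have "chain_in f C \<delta> x ((f ^^ N) x) N"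
    by (rule chain_in_orbit) (use assms(1,2) False chain_component_funpow in auto)
  from cyc_gcd_dvd[OF chain_in_append[OF this assms(3)]] show ?thesis by (simp add: add.commute)
qed

lemma chain_between_orbits:
  assumes \<delta>: "\<delta> > 0" and ec: "rel_delta f C \<delta> e c"
  obtains L where "L \<ge> 1" "chain_in f C \<delta> ((f ^^ N) e) ((f ^^ (N + L)) c) L"
proof -
  have eC: "e \<in> C" and cC: "c \<in> C" using ec by (auto simp: rel_delta_def)
  define p where "p = (f ^^ N) e"
  have pC: "p \<in> C" unfolding p_def by (rule chain_component_funpow[OF eC])
  obtain K where K: "\<And>q l L. chain_in f C \<delta> p q l \<Longrightarrow> K \<le> L \<Longrightarrow> L mod m \<delta> = l mod m \<delta>
      \<Longrightarrow> chain_in f C \<delta> p q L"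
    using chain_in_any_long_length[OF pC \<delta>] by blast
  define L where "L = max K 1"
  obtain u where u: "chain_in f C \<delta> p e u" using chain_component_chain_in[OF pC eC \<delta>] .
  obtain v where v: "chain_in f C \<delta> e c v" "m \<delta> dvd v" using ec by (auto simp: rel_delta_def)
  have "chain_in f C \<delta> c ((f ^^ (N + L)) c) (N + L)"
    by (rule chain_in_orbit) (use \<delta> cC chain_component_funpow in \<open>auto simp: L_def\<close>)
  then have long: "chain_in f C \<delta> p ((f ^^ (N + L)) c) (u + v + (N + L))"
    using chain_in_append[OF chain_in_append[OF u v(1)]] by blast
  have "m \<delta> dvd (u + N) + v"
    using dvd_add[OF cyc_gcd_dvd_orbit_return[OF eC \<delta> u[unfolded p_def]] v(2)] .
  then obtain w where "u + N + v = m \<delta> * w" by (auto elim: dvdE)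
  then have "u + v + (N + L) = L + m \<delta> * w" by simp
  then have "(u + v + (N + L)) mod m \<delta> = (L + m \<delta> * w) mod m \<delta>" by (simp only:)
  then have "L mod m \<delta> = (u + v + (N + L)) mod m \<delta>" by simp
  moreover have "K \<le> L" "L \<ge> 1" by (simp_all add: L_def)
  ultimately have "chain_in f C \<delta> p ((f ^^ (N + L)) c) L" using K[OF long] by blast
  then show ?thesis using that \<open>L \<ge> 1\<close> unfolding p_def by blast
qed

lemma rel_delta_funpow_shift:
  assumes \<delta>: "\<delta> > 0" and ad: "rel_delta f C \<delta> a d" and dx: "chain_in f C \<delta> d x L"
  shows "rel_delta f C \<delta> x ((f ^^ L) a)"
proof -
  obtain p where p: "chain_in f C \<delta> a d p" "m \<delta> dvd p" using ad by (auto simp: rel_delta_def)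
  have aC: "a \<in> C" and xC: "x \<in> C" and L: "L \<ge> 1" using chain_in_ends[OF p(1)] chain_in_ends[OF dx] by auto
  have faC: "(f ^^ L) a \<in> C" by (rule chain_component_funpow[OF aC])
  obtain c where c: "chain_in f C \<delta> ((f ^^ L) a) x c"
    using chain_component_chain_in[OF faC xC \<delta>] .
  have "chain_in f C \<delta> a ((f ^^ L) a) L"
    by (rule chain_in_orbit) (use \<delta> L chain_component_funpow[OF aC] in auto)
  \<comment> \<open>Two chains from \<open>a\<close> to \<open>x\<close>, through \<open>d\<close> and along the orbit of \<open>a\<close>, have congruent lengths.\<close>
  from chain_lengths_mod[OF chain_in_append[OF p(1) dx] chain_in_append[OF this c] \<delta>]
  have "(p + L) mod m \<delta> = (L + c) mod m \<delta>" .
  moreover obtain q where "p = m \<delta> * q" using p(2) by (auto elim: dvdE)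
  ultimately have "(L + c) mod m \<delta> = L mod m \<delta>" by simp
  then have "m \<delta> dvd c" using mod_eq_dvd_iff_nat[of L "L + c"] by simp
  then have "rel_delta f C \<delta> ((f ^^ L) a) x" using c faC xC by (auto simp: rel_delta_def)
  then show ?thesis by (rule rel_delta_sym[OF _ \<delta>])
qed

lemma funpow_into_delta_class:
  assumes \<delta>: "\<delta> > 0" and d0: "d0 \<in> C" and x0: "x0 \<in> C"
  obtains T where "\<And>y. y \<in> cyclic_class f C d0 \<Longrightarrow> rel_delta f C \<delta> x0 ((f ^^ T) y)"
proof -
  obtain L where L: "chain_in f C \<delta> d0 x0 L"
    using chain_component_chain_in[OF d0 x0 \<delta>] .
  have "rel_delta f C \<delta> x0 ((f ^^ L) y)" if "y \<in> cyclic_class f C d0" for y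
  proof (rule rel_delta_funpow_shift[OF \<delta> _ L])
    have "rel_delta f C \<delta> d0 y" using that \<delta> by (simp add: cyclic_class_def)
    then show "rel_delta f C \<delta> y d0" by (rule rel_delta_sym[OF _ \<delta>])
  qed
  then show ?thesis by (rule that)
qed

end

section \<open>Shadowing and stable sets\<close>

definition asymptotic :: "('a::metric_space \<Rightarrow> 'a) \<Rightarrow> 'a \<Rightarrow> 'a \<Rightarrow> bool" where
  "asymptotic f x y \<longleftrightarrow> (\<lambda>i. dist ((f ^^ i) x) ((f ^^ i) y)) \<longlonglongrightarrow> 0"

lemma infdist_lessE:
  assumes "A \<noteq> {}" "infdist x A < d"
  obtains a where "a \<in> A" "dist x a < d"
proof -
  have "bdd_below ((\<lambda>a. dist x a) ` A)" by (rule bdd_belowI[of _ 0]) auto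
  then show ?thesis using assms that unfolding infdist_def by (auto simp: cINF_less_iff)
qed

lemma tendsto_infdist_asymptotic:
  assumes "\<And>i. (f ^^ i) c \<in> A i" "asymptotic f z c"
  shows "(\<lambda>i. infdist ((f ^^ i) z) (A i)) \<longlonglongrightarrow> 0"
proof (rule tendsto_sandwich[of "\<lambda>_. 0" _ _ "\<lambda>i. dist ((f ^^ i) z) ((f ^^ i) c)"])
  show "\<forall>\<^sub>F i in sequentially. infdist ((f ^^ i) z) (A i) \<le> dist ((f ^^ i) z) ((f ^^ i) c)"
    using assms(1) by (simp add: infdist_le)
qed (use assms(2) in \<open>auto simp: asymptotic_def infdist_nonneg\<close>)

lemma chain_splice_orbits:
  assumes chain: "chain_in f S \<delta> ((f ^^ N) y) ((f ^^ (N + L)) c) L" and "\<delta> \<ge> 0"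
  obtains xs where "xs 0 = y" "\<And>i. dist (f (xs i)) (xs (Suc i)) \<le> \<delta>"
    "\<And>i. N + L \<le> i \<Longrightarrow> xs i = (f ^^ i) c"
proof -
  obtain ws where ws: "L \<ge> 1" "ws 0 = (f ^^ N) y" "ws L = (f ^^ (N + L)) c"
    "\<And>i. i < L \<Longrightarrow> dist (f (ws i)) (ws (Suc i)) \<le> \<delta>"
    using chain by (auto elim: chain_inE)
  define xs where "xs i = (if i \<le> N then (f ^^ i) y else if i \<le> N + L then ws (i - N) else (f ^^ i) c)" for i
  have tail: "xs i = (f ^^ i) c" if "N + L \<le> i" for i
    using that ws(1,3) by (auto simp: xs_def)
  have "dist (f (xs i)) (xs (Suc i)) \<le> \<delta>" for i
  proof -
    consider "i < N" | "N \<le> i" "i < N + L" | "N + L \<le> i" by linarith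
    then show ?thesis
    proof cases
      case 1 then show ?thesis using \<open>\<delta> \<ge> 0\<close> by (simp add: xs_def)
    next
      case 2
      then have "xs i = ws (i - N)" "xs (Suc i) = ws (Suc (i - N))" "i - N < L"
        using ws(2) by (auto simp: xs_def Suc_diff_le)
      then show ?thesis using ws(4) by simp
    next
      case 3 then show ?thesis using tail[of i] tail[of "Suc i"] \<open>\<delta> \<ge> 0\<close> by simp
    qed
  qed
  moreover have "xs 0 = y" by (simp add: xs_def)
  ultimately show ?thesis using that tail by blast
qed

lemma s_limit_shadowing_chain_between_orbits:
  assumes "s_limit_shadowing f" "\<epsilon> > 0"
  obtains \<delta> where "\<delta> > 0"
    "\<And>y c N L. chain_in f UNIV \<delta> ((f ^^ N) y) ((f ^^ (N + L)) c) L \<Longrightarrow>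
      \<exists>z. dist z y \<le> \<epsilon> \<and> asymptotic f z c"
proof -
  obtain \<delta> where \<delta>: "\<delta> > 0" and shadow: "\<forall>xs. (\<forall>i. dist (f (xs i)) (xs (Suc i)) \<le> \<delta>) \<and>
      (\<lambda>i. dist (f (xs i)) (xs (Suc i))) \<longlonglongrightarrow> 0 \<longrightarrow>
      (\<exists>x. (\<forall>i. dist ((f ^^ i) x) (xs i) \<le> \<epsilon>) \<and> (\<lambda>i. dist ((f ^^ i) x) (xs i)) \<longlonglongrightarrow> 0)"
    using assms unfolding s_limit_shadowing_def by blast
  have "\<exists>z. dist z y \<le> \<epsilon> \<and> asymptotic f z c"
    if chain: "chain_in f UNIV \<delta> ((f ^^ N) y) ((f ^^ (N + L)) c) L" for y c N L
  proof -
    obtain xs where xs: "xs 0 = y" "\<And>i. dist (f (xs i)) (xs (Suc i)) \<le> \<delta>"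
      "\<And>i. N + L \<le> i \<Longrightarrow> xs i = (f ^^ i) c"
      using chain_splice_orbits[OF chain less_imp_le[OF \<delta>]] by blast
    have "\<forall>\<^sub>F i in sequentially. dist (f (xs i)) (xs (Suc i)) = 0"
      unfolding eventually_sequentially using xs(3) by (intro exI[of _ "N + L"]) simp
    then have "(\<lambda>i. dist (f (xs i)) (xs (Suc i))) \<longlonglongrightarrow> 0" by (rule tendsto_eventually)
    then obtain z where z: "\<And>i. dist ((f ^^ i) z) (xs i) \<le> \<epsilon>"
      "(\<lambda>i. dist ((f ^^ i) z) (xs i)) \<longlonglongrightarrow> 0"
      using shadow xs(2) by blast
    have "\<forall>\<^sub>F i in sequentially. dist ((f ^^ i) z) (xs i) = dist ((f ^^ i) z) ((f ^^ i) c)"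
      unfolding eventually_sequentially using xs(3) by (intro exI[of _ "N + L"]) simp
    then have "asymptotic f z c" unfolding asymptotic_def by (rule Lim_transform_eventually[OF z(2)])
    moreover have "dist z y \<le> \<epsilon>" using z(1)[of 0] xs(1) by simp
    ultimately show ?thesis by blast
  qed
  with \<delta> show ?thesis by (rule that)
qed

context chain_component
begin

lemma mem_Vs_cyclic_class_iff:
  assumes "x0 \<in> C"
  shows "z \<in> Vs f C (cyclic_class f C x0) \<longleftrightarrow> z \<in> Ws f C \<and>
    (\<forall>\<delta>>0. (\<lambda>i. infdist ((f ^^ i) z) ((f ^^ i) ` delta_class f C \<delta> x0)) \<longlonglongrightarrow> 0)"
proof -
  have "z \<in> Vs f C (cyclic_class f C x0) \<longleftrightarrow> (\<forall>\<delta>>0. z \<in> Ws f C \<and>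
      (\<lambda>i. infdist ((f ^^ i) z) ((f ^^ i) ` delta_class f C \<delta> x0)) \<longlonglongrightarrow> 0)"
    unfolding Vs_def by (auto simp: D_sub_cyclic_class[OF assms])
  then show ?thesis using zero_less_one by blast
qed

lemma asymptotic_mem_Vs:
  assumes x0: "x0 \<in> C" and c: "c \<in> cyclic_class f C x0" and z: "asymptotic f z c"
  shows "z \<in> Vs f C (cyclic_class f C x0)"
proof -
  have cC: "c \<in> C" using c cyclic_class_subset by blast
  have "z \<in> Ws f C" unfolding Ws_def
    using tendsto_infdist_asymptotic[OF chain_component_funpow[OF cC] z] by simp
  moreover have "(\<lambda>i. infdist ((f ^^ i) z) ((f ^^ i) ` delta_class f C \<delta> x0)) \<longlonglongrightarrow> 0" if "\<delta> > 0" for \<delta>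
  proof (rule tendsto_infdist_asymptotic[where A="\<lambda>i. (f ^^ i) ` delta_class f C \<delta> x0", OF _ z])
    show "(f ^^ i) c \<in> (f ^^ i) ` delta_class f C \<delta> x0" for i
      using c cyclic_class_subset_delta_class[OF that, of f C x0] by blast
  qed
  ultimately show ?thesis using mem_Vs_cyclic_class_iff[OF x0] by simp
qed

lemma Vs_approx_by_asymptotic:
  assumes x0: "x0 \<in> C" and y: "y \<in> Vs f C (cyclic_class f C x0)" and c: "c \<in> cyclic_class f C x0"
    and sh: "s_limit_shadowing f" and \<epsilon>: "\<epsilon> > 0"
  obtains z where "dist z y \<le> \<epsilon>" "asymptotic f z c"
proof -
  obtain \<delta> where \<delta>: "\<delta> > 0" and shadow: "\<And>y c N L. chain_in f UNIV \<delta> ((f ^^ N) y) ((f ^^ (N + L)) c) L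
      \<Longrightarrow> \<exists>z. dist z y \<le> \<epsilon> \<and> asymptotic f z c"
    using s_limit_shadowing_chain_between_orbits[OF sh \<epsilon>] by blast
  have "(\<lambda>i. infdist ((f ^^ i) y) ((f ^^ i) ` delta_class f C \<delta> x0)) \<longlonglongrightarrow> 0"
    using y \<delta> mem_Vs_cyclic_class_iff[OF x0] by auto
  then have "\<forall>\<^sub>F i in sequentially. infdist ((f ^^ i) y) ((f ^^ i) ` delta_class f C \<delta> x0) < \<delta>"
    using \<delta> by (rule order_tendstoD(2))
  then obtain N where "\<forall>n\<ge>N. infdist ((f ^^ n) y) ((f ^^ n) ` delta_class f C \<delta> x0) < \<delta>"
    unfolding eventually_sequentially by blast
  then have N: "infdist ((f ^^ Suc N) y) ((f ^^ Suc N) ` delta_class f C \<delta> x0) < \<delta>"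
    using le_SucI by blast
  have "x0 \<in> delta_class f C \<delta> x0" using rel_delta_refl[OF x0 \<delta>] by (simp add: delta_class_def)
  then have "(f ^^ Suc N) ` delta_class f C \<delta> x0 \<noteq> {}" by blast
  from infdist_lessE[OF this N] obtain e where
    e: "e \<in> delta_class f C \<delta> x0" "dist ((f ^^ Suc N) y) ((f ^^ Suc N) e) < \<delta>"
    by blast
  \<comment> \<open>Jump from the orbit of \<open>y\<close> to the orbit of \<open>e\<close>, then along a chain in \<open>C\<close> onto the orbit of \<open>c\<close>.\<close>
  have "rel_delta f C \<delta> e c"
    using e(1) c \<delta> by (auto simp: delta_class_def cyclic_class_def intro: rel_delta_trans rel_delta_sym)
  then obtain L where "chain_in f C \<delta> ((f ^^ Suc N) e) ((f ^^ (Suc N + L)) c) L"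
    using chain_between_orbits[OF \<delta>] by blast
  moreover have "chain_in f UNIV \<delta> ((f ^^ N) y) ((f ^^ Suc N) e) 1"
    using e(2) by (intro chain_in_single) auto
  ultimately have "chain_in f UNIV \<delta> ((f ^^ N) y) ((f ^^ (Suc N + L)) c) (1 + L)"
    using chain_in_append chain_in_mono[OF _ subset_UNIV order_refl] by blast
  then have "chain_in f UNIV \<delta> ((f ^^ N) y) ((f ^^ (N + (1 + L))) c) (1 + L)" by simp
  then show ?thesis using shadow that by blast
qed

end

section \<open>Distal tuples\<close>

lemma simultaneous_convergent_subseq:
  fixes s :: "nat \<Rightarrow> nat \<Rightarrow> 'a::metric_space"
  assumes "compact (UNIV :: 'a set)"
  shows "\<exists>r. strict_mono r \<and> (\<forall>j<n. \<exists>l. (\<lambda>k. s j (r k)) \<longlonglongrightarrow> l)"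
proof (induction n)
  case 0 then show ?case by (intro exI[of _ id]) (simp add: strict_mono_def)
next
  case (Suc n)
  then obtain r where r: "strict_mono r" "\<forall>j<n. \<exists>l. (\<lambda>k. s j (r k)) \<longlonglongrightarrow> l" by blast
  obtain l r' where r': "strict_mono r'" "((\<lambda>k. s n (r k)) \<circ> r') \<longlonglongrightarrow> l"
    using compact_imp_seq_compact[OF assms] unfolding seq_compact_def by blast
  have "\<exists>l. (\<lambda>k. s j ((r \<circ> r') k)) \<longlonglongrightarrow> l" if j: "j < Suc n" for j
  proof (cases "j = n")
    case True then show ?thesis using r'(2) by (auto simp: o_def)
  next
    case False
    then have "j < n" using j by simp
    then obtain l' where "(\<lambda>k. s j (r k)) \<longlonglongrightarrow> l'" using r(2) by blast
    from LIMSEQ_subseq_LIMSEQ[OF this r'(1)] show ?thesis by (auto simp: o_def)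
  qed
  moreover have "strict_mono (r \<circ> r')" using r(1) r'(1) by (simp add: strict_mono_def)
  ultimately show ?case by blast
qed

lemma finite_pair_dists: "finite (pair_dists f n x i)"
  by (rule finite_subset[of _ "(\<lambda>(j, k). dist ((f ^^ i) (x j)) ((f ^^ i) (x k))) ` ({..<n} \<times> {..<n})"])
    (auto simp: pair_dists_def)

lemma pair_dists_nonempty: "n \<ge> 2 \<Longrightarrow> pair_dists f n x i \<noteq> {}"
  unfolding pair_dists_def by force

lemma distal_tuple_dist_gt:
  assumes "distal_tuple f \<delta> n a" "j < k" "k < n"
  shows "\<delta> < dist ((f ^^ i) (a j)) ((f ^^ i) (a k))"
proof -
  note fin = finite_pair_dists[of f n a]
  have mem: "dist ((f ^^ i) (a j)) ((f ^^ i) (a k)) \<in> pair_dists f n a i" for i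
    unfolding pair_dists_def using assms(2,3) by blast
  have "(INF i. Min (pair_dists f n a i)) \<le> Min (pair_dists f n a i)"
  proof (rule cINF_lower)
    have "0 \<le> Min (pair_dists f n a i')" for i'
    proof -
      have "Min (pair_dists f n a i') \<in> pair_dists f n a i'" using Min_in[OF fin] mem by blast
      then show ?thesis unfolding pair_dists_def by auto
    qed
    then show "bdd_below (range (\<lambda>i. Min (pair_dists f n a i)))" by (intro bdd_belowI[of _ 0]) auto
  qed simp
  also have "\<dots> \<le> dist ((f ^^ i) (a j)) ((f ^^ i) (a k))" by (rule Min_le[OF fin mem])
  finally show ?thesis using assms(1) unfolding distal_tuple_def by simp
qed

context chain_component
begin

lemma limit_mem_cyclic_class:
  assumes lim: "s \<longlonglongrightarrow> b" and rel: "\<And>k. rel_delta f C (1 / Suc k) x0 (s k)"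
  shows "b \<in> cyclic_class f C x0"
proof -
  have x0: "x0 \<in> C" and sC: "\<And>k. s k \<in> C" using rel by (auto simp: rel_delta_def)
  have bC: "b \<in> C" using closed_sequentially[OF chain_component_closed _ lim] sC by blast
  have "rel_delta f C \<delta> x0 b" if \<delta>: "\<delta> > 0" for \<delta>
  proof -
    obtain d where d: "d > 0" "\<forall>x y. dist x y < d \<longrightarrow> dist (f x) (f y) < \<delta>/2"
      using uniformly_continuous[of "\<delta>/2"] \<delta> by auto
    have "\<forall>\<^sub>F k in sequentially. dist (s k) b < d" using lim d(1) unfolding tendsto_iff by simp
    moreover have "(\<lambda>k. 1 / real (Suc k)) \<longlonglongrightarrow> 0"
      using LIMSEQ_inverse_real_of_nat by (simp add: inverse_eq_divide)
    then have "\<forall>\<^sub>F k in sequentially. 1 / real (Suc k) < \<delta>/2"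
      using \<delta> by (intro order_tendstoD(2)) auto
    ultimately have "\<forall>\<^sub>F k in sequentially. dist (s k) b < d \<and> 1 / real (Suc k) < \<delta>/2"
      by (rule eventually_conj)
    then obtain k where k: "dist (s k) b < d" "1 / real (Suc k) < \<delta>/2"
      unfolding eventually_sequentially by auto
    have "rel_delta f C (\<delta>/2) x0 (s k)" using rel_delta_mono[OF rel[of k] less_imp_le[OF k(2)]] .
    then have "rel_delta f C (\<delta>/2) (s k) x0" by (rule rel_delta_sym) (use \<delta> in simp)
    then obtain l where l: "chain_in f C (\<delta>/2) (s k) x0 l" "m (\<delta>/2) dvd l" by (auto simp: rel_delta_def)
    have "dist (f b) (f (s k)) \<le> \<delta>/2" using d k(1) by (metis dist_commute less_imp_le)
    from chain_in_perturb_start[OF l(1) bC this] have "chain_in f C \<delta> b x0 l" by simp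
    moreover have "m \<delta> dvd l" using dvd_trans[OF cyc_gcd_dvd_mono[of "\<delta>/2" \<delta> f C] l(2)] \<delta> by simp
    ultimately have "rel_delta f C \<delta> b x0" using bC x0 by (auto simp: rel_delta_def)
    then show ?thesis by (rule rel_delta_sym[OF _ \<delta>])
  qed
  then show ?thesis by (simp add: cyclic_class_def)
qed

lemma distal_tuple_transfer:
  fixes a :: "nat \<Rightarrow> 'a" and n :: nat
  assumes d0: "d0 \<in> C" and x0: "x0 \<in> C" and a: "\<And>j. j < n \<Longrightarrow> a j \<in> cyclic_class f C d0"
    and dist_a: "\<And>i j l. j < l \<Longrightarrow> l < n \<Longrightarrow> \<delta> \<le> dist ((f ^^ i) (a j)) ((f ^^ i) (a l))"
  obtains b where "\<And>j. j < n \<Longrightarrow> b j \<in> cyclic_class f C x0"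
    "\<And>i j l. j < l \<Longrightarrow> l < n \<Longrightarrow> \<delta> \<le> dist ((f ^^ i) (b j)) ((f ^^ i) (b l))"
proof -
  \<comment> \<open>A common time \<open>T k\<close> moves every \<open>a j\<close> into the \<open>1/(k+1)\<close>-class of \<open>x0\<close>; pass to a limit.\<close>
  have "\<exists>T. \<forall>y\<in>cyclic_class f C d0. rel_delta f C (1 / Suc k) x0 ((f ^^ T) y)" for k
  proof -
    have "(1::real) / Suc k > 0" by simp
    then obtain T where "\<And>y. y \<in> cyclic_class f C d0 \<Longrightarrow> rel_delta f C (1 / Suc k) x0 ((f ^^ T) y)"
      using funpow_into_delta_class[OF _ d0 x0] by blast
    then show ?thesis by blast
  qed
  then obtain T where T: "\<forall>k. \<forall>y\<in>cyclic_class f C d0. rel_delta f C (1 / Suc k) x0 ((f ^^ T k) y)"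
    using choice[of "\<lambda>k T. \<forall>y\<in>cyclic_class f C d0. rel_delta f C (1 / Suc k) x0 ((f ^^ T) y)"] by blast
  define s where "s j k = (f ^^ T k) (a j)" for j k
  obtain r where r: "strict_mono r" "\<forall>j<n. \<exists>l. (\<lambda>k. s j (r k)) \<longlonglongrightarrow> l"
    using simultaneous_convergent_subseq[OF compact_space, where s=s and n=n] by blast
  then have "\<forall>j. \<exists>l. j < n \<longrightarrow> (\<lambda>k. s j (r k)) \<longlonglongrightarrow> l" by blast
  then obtain b where b: "\<forall>j. j < n \<longrightarrow> (\<lambda>k. s j (r k)) \<longlonglongrightarrow> b j"
    using choice[of "\<lambda>j l. j < n \<longrightarrow> (\<lambda>k. s j (r k)) \<longlonglongrightarrow> l"] by blast
  then have b: "(\<lambda>k. s j (r k)) \<longlonglongrightarrow> b j" if "j < n" for j using that by blast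
  have "b j \<in> cyclic_class f C x0" if j: "j < n" for j
  proof (rule limit_mem_cyclic_class[OF b[OF j]])
    fix k
    have le: "1 / real (Suc (r k)) \<le> 1 / real (Suc k)"
      using seq_suble[OF r(1), of k] by (simp add: frac_le)
    have "rel_delta f C (1 / Suc (r k)) x0 (s j (r k))" using T a[OF j] unfolding s_def by blast
    then show "rel_delta f C (1 / Suc k) x0 (s j (r k))" by (rule rel_delta_mono[OF _ le])
  qed
  moreover have "\<delta> \<le> dist ((f ^^ i) (b j)) ((f ^^ i) (b l))" if jl: "j < l" "l < n" for i j l
  proof (rule dist_funpow_ge_limit[OF b[OF less_trans[OF jl]] b[OF jl(2)]])
    show "\<delta> \<le> dist ((f ^^ i) (s j (r k))) ((f ^^ i) (s l (r k)))" for k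
      using dist_a[OF jl, of "i + T (r k)"] by (simp add: s_def funpow_add)
  qed
  ultimately show ?thesis by (rule that)
qed

end

section \<open>Residual sets of scrambled tuples\<close>

lemma residual_in_subtopologyI:
  assumes "countable \<A>" "\<And>A. A \<in> \<A> \<Longrightarrow> gdelta_in X A"
    and dense: "\<And>A. A \<in> \<A> \<Longrightarrow> P \<subseteq> X closure_of (A \<inter> P)"
    and "P \<subseteq> topspace X" "S \<subseteq> P" "P \<inter> \<Inter>\<A> \<subseteq> S"
  shows "residual_in (subtopology X P) S"
proof -
  have "\<exists>\<O>. countable \<O> \<and> (\<forall>V\<in>\<O>. openin X V) \<and> \<Inter>\<O> = A" if "A \<in> \<A>" for A
    using assms(2)[OF that] unfolding gdelta_in_alt intersection_of_def by blast
  then obtain \<O> where \<O>: "\<And>A. A \<in> \<A> \<Longrightarrow> countable (\<O> A)"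
    "\<And>A V. A \<in> \<A> \<Longrightarrow> V \<in> \<O> A \<Longrightarrow> openin X V" "\<And>A. A \<in> \<A> \<Longrightarrow> \<Inter>(\<O> A) = A"
    by (metis (no_types))
  define \<U> where "\<U> = (\<lambda>V. V \<inter> P) ` (\<Union>A\<in>\<A>. \<O> A)"
  have topspace: "topspace (subtopology X P) = P" using assms(4) by auto
  show ?thesis unfolding residual_in_def
  proof (intro conjI exI[of _ \<U>] ballI)
    show "S \<subseteq> topspace (subtopology X P)" using assms(5) topspace by simp
    show "countable \<U>" unfolding \<U>_def by (intro countable_image countable_UN assms(1) \<O>(1))
  next
    fix U assume "U \<in> \<U>"
    then obtain A V where A: "A \<in> \<A>" "V \<in> \<O> A" "U = V \<inter> P" unfolding \<U>_def by blast
    then show "openin (subtopology X P) U" using \<O>(2) by (auto intro: openin_subtopology_Int)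
    have "\<Inter>(\<O> A) \<subseteq> V" using A(2) by (rule Inter_lower)
    then have "A \<inter> P \<subseteq> P \<inter> U" using \<O>(3)[OF A(1)] A(3) by auto
    then have "P \<subseteq> X closure_of (P \<inter> U)" using dense[OF A(1)] closure_of_mono by blast
    then have "P \<inter> X closure_of (P \<inter> U) = P" by blast
    then show "subtopology X P closure_of U = topspace (subtopology X P)"
      using topspace by (simp add: closure_of_subtopology)
  next
    have "z \<in> A" if z: "z \<in> P \<inter> \<Inter>\<U>" and A: "A \<in> \<A>" for z A
    proof -
      have "z \<in> V" if "V \<in> \<O> A" for V using z A that unfolding \<U>_def by blast
      then show ?thesis using \<O>(3)[OF A] by auto
    qed
    then have "P \<inter> \<Inter>\<U> \<subseteq> P \<inter> \<Inter>\<A>" by blast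
    then show "topspace (subtopology X P) \<inter> \<Inter>\<U> \<subseteq> S" using assms(6) topspace by blast
  qed
qed

lemma full_family_eventually:
  assumes "furstenberg_family F" "full_family F" "\<forall>\<^sub>F i in sequentially. i \<in> A"
  shows "A \<in> F"
proof -
  obtain M where M: "{i. i \<ge> M} \<subseteq> A" using assms(3) unfolding eventually_sequentially by blast
  obtain B where "B \<in> F" using assms(1) unfolding furstenberg_family_def by auto
  then have "UNIV \<in> F" using assms(1) unfolding furstenberg_family_def by blast
  then have "{i \<in> UNIV. i \<ge> M} \<in> F" using assms(2) unfolding full_family_def by blast
  then show ?thesis using assms(1) M unfolding furstenberg_family_def by auto
qed

lemma continuous_map_dist:
  fixes g h :: "'b \<Rightarrow> 'a::metric_space"
  assumes "continuous_map X euclidean g" "continuous_map X euclidean h"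
  shows "continuous_map X euclideanreal (\<lambda>x. dist (g x) (h x))"
  using assms by (simp add: continuous_map_atin tendsto_dist)

lemma topspace_prod_top: "topspace (prod_top n) = PiE {..<n} (\<lambda>_. UNIV)"
  by (simp add: prod_top_def)

lemma prod_map_funpow:
  assumes "z \<in> PiE {..<n} (\<lambda>_. UNIV)"
  shows "(prod_map f n ^^ i) z = restrict (\<lambda>j. (f ^^ i) (z j)) {..<n}"
proof (induction i)
  case 0 then show ?case using assms by (simp add: PiE_restrict)
next
  case (Suc i) then show ?case by (auto simp: prod_map_def fun_eq_iff)
qed

definition pairs_in :: "nat \<Rightarrow> real set \<Rightarrow> (nat \<Rightarrow> 'a::metric_space) set" where
  "pairs_in n U = {w \<in> topspace (prod_top n). \<forall>j k. j < k \<longrightarrow> k < n \<longrightarrow> dist (w j) (w k) \<in> U}"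

lemma openin_pairs_in:
  assumes "open U"
  shows "openin (prod_top n) (pairs_in n U)"
proof -
  define V where "V p = {w \<in> topspace (prod_top n :: (nat \<Rightarrow> 'a) topology). dist (w (fst p)) (w (snd p)) \<in> U}" for p
  define Pairs where "Pairs = {(j, k). j < k \<and> k < n}"
  have "openin (prod_top n) (V p)" if p: "p \<in> Pairs" for p
  proof -
    have "fst p \<in> {..<n}" "snd p \<in> {..<n}" using p by (auto simp: Pairs_def)
    then have "continuous_map (prod_top n) euclideanreal (\<lambda>w. dist (w (fst p)) (w (snd p)))"
      unfolding prod_top_def
      by (intro continuous_map_dist continuous_map_product_projection)
    then show ?thesis unfolding V_def using assms by (intro openin_continuous_map_preimage) auto
  qed
  moreover have "finite Pairs" by (rule finite_subset[of _ "{..<n} \<times> {..<n}"]) (auto simp: Pairs_def)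
  ultimately have "openin (prod_top n) ((\<Inter>p\<in>Pairs. V p) \<inter> topspace (prod_top n))" by blast
  moreover have "(\<Inter>p\<in>Pairs. V p) \<inter> topspace (prod_top n) = pairs_in n U"
    unfolding V_def Pairs_def pairs_in_def by auto
  ultimately show ?thesis by simp
qed

lemma Min_pair_dists_gt_iff:
  assumes "n \<ge> 2"
  shows "r < Min (pair_dists f n x i) \<longleftrightarrow>
    (\<forall>j k. j < k \<longrightarrow> k < n \<longrightarrow> r < dist ((f ^^ i) (x j)) ((f ^^ i) (x k)))"
proof -
  have "r < Min (pair_dists f n x i) \<longleftrightarrow> (\<forall>d\<in>pair_dists f n x i. r < d)"
    by (rule Min_gr_iff[OF finite_pair_dists pair_dists_nonempty[OF assms]])
  then show ?thesis unfolding pair_dists_def by blast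
qed

lemma Max_pair_dists_less_iff:
  assumes "n \<ge> 2"
  shows "Max (pair_dists f n x i) < r \<longleftrightarrow>
    (\<forall>j k. j < k \<longrightarrow> k < n \<longrightarrow> dist ((f ^^ i) (x j)) ((f ^^ i) (x k)) < r)"
proof -
  have "Max (pair_dists f n x i) < r \<longleftrightarrow> (\<forall>d\<in>pair_dists f n x i. d < r)"
    by (rule Max_less_iff[OF finite_pair_dists pair_dists_nonempty[OF assms]])
  then show ?thesis unfolding pair_dists_def by blast
qed

lemma S_set_eq_visits:
  assumes "n \<ge> 2" "z \<in> topspace (prod_top n)"
  shows "S_set f n z r = {i. (prod_map f n ^^ i) z \<in> pairs_in n {r<..}}"
  using assms prod_map_funpow[where z=z and n=n and f=f] unfolding topspace_prod_top
  by (auto simp: S_set_def pairs_in_def Min_pair_dists_gt_iff topspace_prod_top PiE_iff)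

lemma T_set_eq_visits:
  assumes "n \<ge> 2" "z \<in> topspace (prod_top n)"
  shows "T_set f n z r = {i. (prod_map f n ^^ i) z \<in> pairs_in n {..<r}}"
  using assms prod_map_funpow[where z=z and n=n and f=f] unfolding topspace_prod_top
  by (auto simp: T_set_def pairs_in_def Max_pair_dists_less_iff topspace_prod_top PiE_iff)

lemma gdelta_in_S_set:
  assumes "compatible F f n" "n \<ge> 2"
  shows "gdelta_in (prod_top n) {z \<in> topspace (prod_top n). S_set f n z r \<in> F}"
proof -
  have "gdelta_in (prod_top n) {z \<in> topspace (prod_top n). {i. (prod_map f n ^^ i) z \<in> pairs_in n {r<..}} \<in> F}"
    using assms(1) openin_pairs_in[OF open_greaterThan] unfolding compatible_def by blast
  moreover have "{z \<in> topspace (prod_top n). {i. (prod_map f n ^^ i) z \<in> pairs_in n {r<..}} \<in> F} =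
      {z \<in> topspace (prod_top n). S_set f n z r \<in> F}"
    using S_set_eq_visits[OF assms(2), where f=f and r=r] by auto
  ultimately show ?thesis by simp
qed

lemma gdelta_in_T_set:
  assumes "compatible F f n" "n \<ge> 2"
  shows "gdelta_in (prod_top n) {z \<in> topspace (prod_top n). T_set f n z r \<in> F}"
proof -
  have "gdelta_in (prod_top n) {z \<in> topspace (prod_top n). {i. (prod_map f n ^^ i) z \<in> pairs_in n {..<r}} \<in> F}"
    using assms(1) openin_pairs_in[OF open_lessThan] unfolding compatible_def by blast
  moreover have "{z \<in> topspace (prod_top n). {i. (prod_map f n ^^ i) z \<in> pairs_in n {..<r}} \<in> F} =
      {z \<in> topspace (prod_top n). T_set f n z r \<in> F}"
    using T_set_eq_visits[OF assms(2), where f=f and r=r] by auto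
  ultimately show ?thesis by simp
qed

lemma T_set_mono: "r \<le> r' \<Longrightarrow> T_set f n z r \<subseteq> T_set f n z r'"
  by (auto simp: T_set_def)

lemma scrambledI_inverse_Suc:
  assumes "furstenberg_family G" "S_set f n z r \<in> F" "\<And>k. T_set f n z (1 / Suc k) \<in> G"
  shows "scrambled F G f n r z"
proof -
  have "T_set f n z \<epsilon> \<in> G" if "\<epsilon> > 0" for \<epsilon>
  proof -
    obtain k where "1 / real (Suc k) < \<epsilon>" using reals_Archimedean[OF \<open>\<epsilon> > 0\<close>]
      by (auto simp: inverse_eq_divide)
    then have "T_set f n z (1 / Suc k) \<subseteq> T_set f n z \<epsilon>" by (intro T_set_mono) simp
    then show ?thesis using assms(1) assms(3)[of k] unfolding furstenberg_family_def by blast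
  qed
  then show ?thesis using assms(2) unfolding scrambled_def by blast
qed

lemma eventually_dist_funpow_close:
  fixes z b :: "nat \<Rightarrow> 'a::metric_space"
  assumes asym: "\<And>j. j < n \<Longrightarrow> asymptotic f (z j) (b j)" and \<eta>: "\<eta> > 0"
  shows "\<forall>\<^sub>F i in sequentially. \<forall>j<n. \<forall>k<n.
    \<bar>dist ((f ^^ i) (z j)) ((f ^^ i) (z k)) - dist ((f ^^ i) (b j)) ((f ^^ i) (b k))\<bar> < \<eta>"
proof -
  have "\<forall>\<^sub>F i in sequentially. dist ((f ^^ i) (z j)) ((f ^^ i) (b j)) < \<eta>/2" if "j < n" for j
    using order_tendstoD(2)[OF asym[OF that, unfolded asymptotic_def], of "\<eta>/2"] \<eta> by simp
  then have "\<forall>j\<in>{..<n}. \<forall>\<^sub>F i in sequentially. dist ((f ^^ i) (z j)) ((f ^^ i) (b j)) < \<eta>/2"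
    by blast
  then have "\<forall>\<^sub>F i in sequentially. \<forall>j\<in>{..<n}. dist ((f ^^ i) (z j)) ((f ^^ i) (b j)) < \<eta>/2"
    by (rule eventually_ball_finite[rotated]) simp
  then show ?thesis
  proof (rule eventually_mono, intro allI impI)
    fix i j k
    assume close: "\<forall>j\<in>{..<n}. dist ((f ^^ i) (z j)) ((f ^^ i) (b j)) < \<eta>/2" and "j < n" "k < n"
    then have "dist ((f ^^ i) (z j)) ((f ^^ i) (b j)) < \<eta>/2" "dist ((f ^^ i) (z k)) ((f ^^ i) (b k)) < \<eta>/2"
      by auto
    then show "\<bar>dist ((f ^^ i) (z j)) ((f ^^ i) (z k)) - dist ((f ^^ i) (b j)) ((f ^^ i) (b k))\<bar> < \<eta>"
      using dist_triangle[of "(f ^^ i) (z j)" "(f ^^ i) (z k)" "(f ^^ i) (b j)"]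
        dist_triangle[of "(f ^^ i) (b j)" "(f ^^ i) (z k)" "(f ^^ i) (b k)"]
        dist_triangle[of "(f ^^ i) (b j)" "(f ^^ i) (b k)" "(f ^^ i) (z j)"]
        dist_triangle[of "(f ^^ i) (z j)" "(f ^^ i) (b k)" "(f ^^ i) (z k)"]
      by (simp add: dist_commute abs_less_iff)
  qed
qed

lemma S_set_mem_if_asymptotic:
  fixes z b :: "nat \<Rightarrow> 'a::metric_space"
  assumes F: "furstenberg_family F" "full_family F" and n: "n \<ge> 2"
    and asym: "\<And>j. j < n \<Longrightarrow> asymptotic f (z j) (b j)"
    and b_apart: "\<And>i j k. j < k \<Longrightarrow> k < n \<Longrightarrow> \<delta> \<le> dist ((f ^^ i) (b j)) ((f ^^ i) (b k))"
    and "r < \<delta>"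
  shows "S_set f n z r \<in> F"
proof (rule full_family_eventually[OF F])
  have "\<forall>\<^sub>F i in sequentially. \<forall>j<n. \<forall>k<n.
      \<bar>dist ((f ^^ i) (z j)) ((f ^^ i) (z k)) - dist ((f ^^ i) (b j)) ((f ^^ i) (b k))\<bar> < \<delta> - r"
    by (rule eventually_dist_funpow_close) (use asym \<open>r < \<delta>\<close> in auto)
  then show "\<forall>\<^sub>F i in sequentially. i \<in> S_set f n z r"
  proof (rule eventually_mono)
    fix i assume close: "\<forall>j<n. \<forall>k<n. \<bar>dist ((f ^^ i) (z j)) ((f ^^ i) (z k)) -
      dist ((f ^^ i) (b j)) ((f ^^ i) (b k))\<bar> < \<delta> - r"
    have "r < dist ((f ^^ i) (z j)) ((f ^^ i) (z k))" if jk: "j < k" "k < n" for j k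
    proof -
      have "\<bar>dist ((f ^^ i) (z j)) ((f ^^ i) (z k)) - dist ((f ^^ i) (b j)) ((f ^^ i) (b k))\<bar> < \<delta> - r"
        using close jk less_trans[OF jk] by blast
      then show ?thesis using b_apart[OF jk, of i] by (simp add: abs_less_iff)
    qed
    then show "i \<in> S_set f n z r" by (simp add: S_set_def Min_pair_dists_gt_iff[OF n])
  qed
qed

lemma T_set_mem_if_asymptotic:
  fixes z :: "nat \<Rightarrow> 'a::metric_space"
  assumes G: "furstenberg_family G" "full_family G" and n: "n \<ge> 2"
    and asym: "\<And>j. j < n \<Longrightarrow> asymptotic f (z j) x0" and "\<epsilon> > 0"
  shows "T_set f n z \<epsilon> \<in> G"
proof (rule full_family_eventually[OF G])
  have "\<forall>\<^sub>F i in sequentially. \<forall>j<n. \<forall>k<n.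
      \<bar>dist ((f ^^ i) (z j)) ((f ^^ i) (z k)) - dist ((f ^^ i) x0) ((f ^^ i) x0)\<bar> < \<epsilon>"
    by (rule eventually_dist_funpow_close) (use asym \<open>\<epsilon> > 0\<close> in auto)
  then show "\<forall>\<^sub>F i in sequentially. i \<in> T_set f n z \<epsilon>"
    by (rule eventually_mono) (auto simp: T_set_def Max_pair_dists_less_iff[OF n])
qed

context chain_component
begin

lemma Vs_tuples_subset_closure:
  assumes x0: "x0 \<in> C" and sh: "s_limit_shadowing f"
    and c: "\<And>j. j < n \<Longrightarrow> c j \<in> cyclic_class f C x0"
    and A: "\<And>z. z \<in> PiE {..<n} (\<lambda>_. Vs f C (cyclic_class f C x0)) \<Longrightarrow>
      (\<And>j. j < n \<Longrightarrow> asymptotic f (z j) (c j)) \<Longrightarrow> z \<in> A"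
  shows "PiE {..<n} (\<lambda>_. Vs f C (cyclic_class f C x0)) \<subseteq>
    prod_top n closure_of (A \<inter> PiE {..<n} (\<lambda>_. Vs f C (cyclic_class f C x0)))"
proof
  define Y where "Y = Vs f C (cyclic_class f C x0)"
  fix y assume y: "y \<in> PiE {..<n} (\<lambda>_. Y)"
  have "\<exists>z\<in>A \<inter> PiE {..<n} (\<lambda>_. Y). z \<in> W" if W: "openin (prod_top n) W" "y \<in> W" for W
  proof -
    obtain U where U: "\<forall>j\<in>{..<n}. openin euclidean (U j)" "y \<in> PiE {..<n} U" "PiE {..<n} U \<subseteq> W"
      using W unfolding prod_top_def openin_product_topology_alt by blast
    have "\<exists>w. w \<in> U j \<and> w \<in> Y \<and> asymptotic f w (c j)" if j: "j < n" for j
    proof -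
      have "y j \<in> U j" "y j \<in> Y" using U(2) y j by auto
      moreover have "open (U j)" using U(1) j by simp
      ultimately obtain e where e: "e > 0" "ball (y j) e \<subseteq> U j" using open_contains_ball by blast
      obtain w where w: "dist w (y j) \<le> e/2" "asymptotic f w (c j)"
        using Vs_approx_by_asymptotic[OF x0 \<open>y j \<in> Y\<close>[unfolded Y_def] c[OF j] sh, of "e/2"] e(1) by auto
      have "w \<in> U j" using w(1) e by (intro subsetD[OF e(2)]) (simp add: dist_commute)
      moreover have "w \<in> Y" unfolding Y_def by (rule asymptotic_mem_Vs[OF x0 c[OF j] w(2)])
      ultimately show ?thesis using w(2) by blast
    qed
    then have "\<forall>j. \<exists>w. j < n \<longrightarrow> w \<in> U j \<and> w \<in> Y \<and> asymptotic f w (c j)" by blast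
    then obtain w where "\<forall>j. j < n \<longrightarrow> w j \<in> U j \<and> w j \<in> Y \<and> asymptotic f (w j) (c j)"
      using choice[of "\<lambda>j w. j < n \<longrightarrow> w \<in> U j \<and> w \<in> Y \<and> asymptotic f w (c j)"] by blast
    then have w: "\<And>j. j < n \<Longrightarrow> w j \<in> U j \<and> w j \<in> Y \<and> asymptotic f (w j) (c j)" by blast
    define z where "z = restrict w {..<n}"
    have "z \<in> PiE {..<n} (\<lambda>_. Y)" "z \<in> PiE {..<n} U" using w by (auto simp: z_def)
    moreover have "z \<in> A" using A[folded Y_def] w \<open>z \<in> PiE {..<n} (\<lambda>_. Y)\<close> by (auto simp: z_def)
    ultimately show ?thesis using U(3) by blast
  qed
  moreover have "y \<in> topspace (prod_top n)" using y by (auto simp: topspace_prod_top PiE_iff)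
  ultimately show "y \<in> prod_top n closure_of (A \<inter> PiE {..<n} (\<lambda>_. Vs f C (cyclic_class f C x0)))"
    unfolding Y_def in_closure_of by blast
qed

lemma Vs_tuples_subset_closure_S_set:
  assumes n: "n \<ge> 2" and x0: "x0 \<in> C" and sh: "s_limit_shadowing f"
    and F: "furstenberg_family F" "full_family F"
    and b: "\<And>j. j < n \<Longrightarrow> b j \<in> cyclic_class f C x0"
    and b_apart: "\<And>i j k. j < k \<Longrightarrow> k < n \<Longrightarrow> \<delta> \<le> dist ((f ^^ i) (b j)) ((f ^^ i) (b k))"
    and r: "r < \<delta>"
  shows "PiE {..<n} (\<lambda>_. Vs f C (cyclic_class f C x0)) \<subseteq> prod_top n closure_of
    ({z \<in> topspace (prod_top n). S_set f n z r \<in> F} \<inter> PiE {..<n} (\<lambda>_. Vs f C (cyclic_class f C x0)))"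
proof (rule Vs_tuples_subset_closure[where c=b, OF x0 sh b])
  fix z assume "z \<in> PiE {..<n} (\<lambda>_. Vs f C (cyclic_class f C x0))"
    and asym: "\<And>j. j < n \<Longrightarrow> asymptotic f (z j) (b j)"
  then show "z \<in> {z \<in> topspace (prod_top n). S_set f n z r \<in> F}"
    using S_set_mem_if_asymptotic[OF F n asym b_apart r] by (auto simp: topspace_prod_top PiE_iff)
qed

lemma Vs_tuples_subset_closure_T_set:
  assumes n: "n \<ge> 2" and x0: "x0 \<in> C" and sh: "s_limit_shadowing f"
    and G: "furstenberg_family G" "full_family G" and "\<epsilon> > 0"
  shows "PiE {..<n} (\<lambda>_. Vs f C (cyclic_class f C x0)) \<subseteq> prod_top n closure_of
    ({z \<in> topspace (prod_top n). T_set f n z \<epsilon> \<in> G} \<inter> PiE {..<n} (\<lambda>_. Vs f C (cyclic_class f C x0)))"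
proof (rule Vs_tuples_subset_closure[where c="\<lambda>_. x0", OF x0 sh self_in_cyclic_class[OF x0]])
  fix z assume "z \<in> PiE {..<n} (\<lambda>_. Vs f C (cyclic_class f C x0))"
    and asym: "\<And>j. j < n \<Longrightarrow> asymptotic f (z j) x0"
  then show "z \<in> {z \<in> topspace (prod_top n). T_set f n z \<epsilon> \<in> G}"
    using T_set_mem_if_asymptotic[OF G n asym \<open>\<epsilon> > 0\<close>] by (auto simp: topspace_prod_top PiE_iff)
qed

lemma generic_chaotic_cyclic_class:
  assumes n: "n \<ge> 2" and x0: "x0 \<in> C" and sh: "s_limit_shadowing f"
    and F: "furstenberg_family F" "full_family F" "compatible F f n"
    and G: "furstenberg_family G" "full_family G" "compatible G f n"
    and b: "\<And>j. j < n \<Longrightarrow> b j \<in> cyclic_class f C x0"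
    and b_apart: "\<And>i j k. j < k \<Longrightarrow> k < n \<Longrightarrow> \<delta> \<le> dist ((f ^^ i) (b j)) ((f ^^ i) (b k))"
    and r: "r < \<delta>"
  shows "generic_chaotic F G f n r (Vs f C (cyclic_class f C x0))"
proof -
  define P where "P = PiE {..<n} (\<lambda>_. Vs f C (cyclic_class f C x0))"
  define X where "X = (prod_top n :: (nat \<Rightarrow> 'a) topology)"
  define AS where "AS = {z \<in> topspace X. S_set f n z r \<in> F}"
  define AT where "AT k = {z \<in> topspace X. T_set f n z (1 / Suc k) \<in> G}" for k
  have P: "P \<subseteq> topspace X" unfolding P_def X_def by (auto simp: topspace_prod_top PiE_iff)
  have dense_S: "P \<subseteq> X closure_of (AS \<inter> P)"
    unfolding P_def X_def AS_def by (rule Vs_tuples_subset_closure_S_set[OF n x0 sh F(1,2) b b_apart r])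
  have dense_T: "P \<subseteq> X closure_of (AT k \<inter> P)" for k
    unfolding P_def X_def AT_def by (rule Vs_tuples_subset_closure_T_set[OF n x0 sh G(1,2)]) simp
  have scrambled: "scrambled F G f n r z" if z: "z \<in> P \<inter> \<Inter>(insert AS (range AT))" for z
  proof (rule scrambledI_inverse_Suc[OF G(1)])
    show "S_set f n z r \<in> F" using z unfolding AS_def by blast
    show "T_set f n z (1 / Suc k) \<in> G" for k using z unfolding AT_def by blast
  qed
  have "residual_in (subtopology X P) {z \<in> P. scrambled F G f n r z}"
  proof (rule residual_in_subtopologyI[of "insert AS (range AT)"])
    show "gdelta_in X A" if "A \<in> insert AS (range AT)" for A
      using that gdelta_in_S_set[OF F(3) n] gdelta_in_T_set[OF G(3) n]
      unfolding X_def AS_def AT_def by blast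
    show "P \<subseteq> X closure_of (A \<inter> P)" if "A \<in> insert AS (range AT)" for A
      using that dense_S dense_T by blast
  qed (use P scrambled in auto)
  moreover have "x0 \<in> Vs f C (cyclic_class f C x0)"
    by (rule asymptotic_mem_Vs[OF x0 self_in_cyclic_class[OF x0]]) (simp add: asymptotic_def)
  ultimately show ?thesis unfolding generic_chaotic_def P_def X_def by auto
qed

end

theorem corollary1p2:
  fixes f :: "'a::metric_space \<Rightarrow> 'a"
    and F G :: "nat set set"
    and C D :: "'a set"
    and n :: nat and \<delta> :: real
    and a :: "nat \<Rightarrow> 'a"
  assumes "compact (UNIV :: 'a set)"
    and "continuous_on UNIV f"
    and "s_limit_shadowing f"
    and "C \<in> chain_components f"
    and "D \<in> D_classes f C"
    and "furstenberg_family F" and "full_family F"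
    and "furstenberg_family G" and "full_family G"
    and "\<forall>m\<ge>2. compatible F f m"
    and "\<forall>m\<ge>2. compatible G f m"
    and "translation_invariant F"
    and "n \<ge> 2" and "\<delta> > 0"
    and "\<forall>j<n. a j \<in> D"
    and "distal_tuple f \<delta> n a"
  shows "\<forall>E \<in> D_classes f C. \<forall>r. 0 < r \<and> r < \<delta> \<longrightarrow> generic_chaotic F G f n r (Vs f C E)"
proof (intro ballI allI impI, elim conjE)
  fix E r assume E: "E \<in> D_classes f C" and r: "r < \<delta>"
  interpret chain_component f C by unfold_locales (use assms(1,2,4) in auto)
  obtain d0 where d0: "d0 \<in> C" "D = cyclic_class f C d0" using assms(5) by (auto simp: D_classes_eq)
  obtain x0 where x0: "x0 \<in> C" "E = cyclic_class f C x0" using E by (auto simp: D_classes_eq)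
  have a_class: "\<And>j. j < n \<Longrightarrow> a j \<in> cyclic_class f C d0" using assms(15) d0(2) by simp
  have a_apart: "\<And>i j k. j < k \<Longrightarrow> k < n \<Longrightarrow> \<delta> \<le> dist ((f ^^ i) (a j)) ((f ^^ i) (a k))"
    by (rule less_imp_le[OF distal_tuple_dist_gt[OF assms(16)]])
  obtain b where b: "\<And>j. j < n \<Longrightarrow> b j \<in> cyclic_class f C x0"
    and b_apart: "\<And>i j k. j < k \<Longrightarrow> k < n \<Longrightarrow> \<delta> \<le> dist ((f ^^ i) (b j)) ((f ^^ i) (b k))"
    using distal_tuple_transfer[where a=a and n=n and \<delta>=\<delta>, OF d0(1) x0(1) a_class a_apart] by blast
  have "compatible F f n" "compatible G f n" using assms(10,11,13) by simp_all
  with generic_chaotic_cyclic_class[OF assms(13) x0(1) assms(3,6,7) _ assms(8,9) _ b b_apart r]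
  show "generic_chaotic F G f n r (Vs f C E)" using x0(2) by simp
qed

end
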